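(* Let $k \in \mathbb{N}$. Every linear $k$-DCFG $G$ is equivalent to (i.e. generates the same language as) some $k$-DCFG $G'=\langle N, \Sigma, P, S\rangle$ all of whose rules have one of the following forms, where $A, B \in N$ and $u \in \Theta$: (1) $A \to u\cdot B$ or $A \to B \cdot u$, with $|u| = 1$; (2) $A \to B \odot_j u$, with $|u| = 1$; (3) $A \to u$, with $|u| = 1$; (4) $S \to \epsilon$ (where $S$ is the start symbol).
   Context: Fix a finite alphabet $\Sigma$; $\Sigma^*$ is the set of words over $\Sigma$ and $\epsilon$ the empty word. $\Theta_k$ is the set of tuples $(u_0,\ldots,u_k)$ with $u_i\in\Sigma^*$, and $\Theta=\bigcup_{k\in\mathbb{N}}\Theta_k$; the rank of $(u_0,\ldots,u_k)$ is $k$, and its length $|u|$ is the sum of the lengths of its components. Rank-$0$ tuples are identified with words; in particular $\epsilon$ also denotes the rank-$0$ tuple $(\epsilon)$. Concatenation $\cdot:\Theta_i\times\Theta_j\to\Theta_{i+j}$ is $(x_0,\ldots,x_i)\cdot(y_0,\ldots,y_j)=(x_0,\ldots,x_{i-1},x_iy_0,y_1,\ldots,y_j)$, and for $1\le l\le i$ intercalation $\odot_l:\Theta_i\times\Theta_j\to\Theta_{i+j-1}$ is $(x_0,\ldots,x_i)\odot_l(y_0,\ldots,y_j)=(x_0,\ldots,x_{l-2},x_{l-1}y_0,y_1,\ldots,y_{j-1},y_jx_l,x_{l+1},\ldots,x_i)$. Let $N$ be a finite set of nonterminals disjoint from $\Sigma$ with a rank function $\mathrm{rk}:N\to\mathbb{N}$.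 The set of $k$-correct terms $\mathrm{Tm}_k(N,\Sigma)$ and their ranks are defined inductively: every tuple in $\Theta_j$ with $j\le k$ is a term of rank $j$, and every nonterminal $A$ with $\mathrm{rk}(A)\le k$ is a term of rank $\mathrm{rk}(A)$; if $\alpha,\beta$ are terms with $\mathrm{rk}\,\alpha+\mathrm{rk}\,\beta\le k$ then $(\alpha\cdot\beta)$ is a term of rank $\mathrm{rk}\,\alpha+\mathrm{rk}\,\beta$; if $1\le j\le k$, $\mathrm{rk}\,\alpha\ge j$ and $\mathrm{rk}\,\alpha+\mathrm{rk}\,\beta\le k+1$ then $(\alpha\odot_j\beta)$ is a term of rank $\mathrm{rk}\,\alpha+\mathrm{rk}\,\beta-1$. A ground term is one containing no nonterminals; its value $\nu(\alpha)\in\Theta$ is obtained by interpreting $\cdot$ and $\odot_j$ as the operations above. A context $C[x]$ is a term with one leaf occurrence of a variable $x$ of some rank; $C[\beta]$ is the result of substituting a term $\beta$ of the same rank for $x$. A $k$-displacement context-free grammar ($k$-DCFG) is $G=\langle N,\Sigma,P,S\rangle$ where $S\in N$ has rank $0$ and $P$ is a finite set of rules $A\to\alpha$ with $A\in N$, $\alpha\in\mathrm{Tm}_k(N,\Sigma)$ and $\mathrm{rk}(A)=\mathrm{rk}(\alpha)$. Standing assumption: all tuples occurring as leaves of right-hand sides of rules have length at most $1$. Derivability $\vdash_G$ is the smallest reflexive transitive relation between nonterminals and terms such that $(B\to\beta)\in P$ and $A\vdash_G C[B]$ imply $A\vdash_G C[\beta]$ for any context $C$. $L_G(A)=\{\nu(\alpha)\mid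 A\vdash_G\alpha,\ \alpha \text{ ground}\}$ and $L(G)=L_G(S)$. Two grammars are equivalent if they generate the same language. A term is linear if it contains at most one occurrence of a nonterminal; a grammar is linear if the right-hand sides of all its rules are linear. All right-hand sides in the claim are required to be $k$-correct terms of the same rank as the left-hand side. *)

theory Defs
  imports Main
begin

text \<open>A tuple (u_0,...,u_k) is a nonempty list of words; its rank is length - 1.\<close>

type_synonym 'a tuple = "'a list list"

definition tup_rank :: "'a tuple \<Rightarrow> nat" where
  "tup_rank u = length u - 1"

definition tup_len :: "'a tuple \<Rightarrow> nat" where
  "tup_len u = sum_list (map length u)"

definition tcat :: "'a tuple \<Rightarrow> 'a tuple \<Rightarrow> 'a tuple" where
  "tcat x y = butlast x @ [last x @ hd y] @ tl y"

text \<open>Intercalation at position l (1-based): equals (x_0..x_{l-1}) . y . (x_l..x_i).\<close>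
definition tintc :: "nat \<Rightarrow> 'a tuple \<Rightarrow> 'a tuple \<Rightarrow> 'a tuple" where
  "tintc l x y = tcat (tcat (take l x) y) (drop l x)"

datatype ('n, 'a) tm =
    Tup "'a tuple"
  | NT 'n
  | Cat "('n, 'a) tm" "('n, 'a) tm"
  | Intc nat "('n, 'a) tm" "('n, 'a) tm"

fun trank :: "('n \<Rightarrow> nat) \<Rightarrow> ('n, 'a) tm \<Rightarrow> nat" where
  "trank rk (Tup u) = tup_rank u"
| "trank rk (NT A) = rk A"
| "trank rk (Cat a b) = trank rk a + trank rk b"
| "trank rk (Intc j a b) = trank rk a + trank rk b - 1"

fun correct :: "nat \<Rightarrow> ('n \<Rightarrow> nat) \<Rightarrow> ('n, 'a) tm \<Rightarrow> bool" where
  "correct k rk (Tup u) = (u \<noteq> [] \<and> tup_rank u \<le> k)"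
| "correct k rk (NT A) = (rk A \<le> k)"
| "correct k rk (Cat a b) =
     (correct k rk a \<and> correct k rk b \<and> trank rk a + trank rk b \<le> k)"
| "correct k rk (Intc j a b) =
     (correct k rk a \<and> correct k rk b \<and> 1 \<le> j \<and> j \<le> k \<and>
      j \<le> trank rk a \<and> trank rk a + trank rk b \<le> k + 1)"

fun nts_of :: "('n, 'a) tm \<Rightarrow> 'n list" where
  "nts_of (Tup u) = []"
| "nts_of (NT A) = [A]"
| "nts_of (Cat a b) = nts_of a @ nts_of b"
| "nts_of (Intc j a b) = nts_of a @ nts_of b"

fun leaves :: "('n, 'a) tm \<Rightarrow> 'a tuple list" where
  "leaves (Tup u) = [u]"
| "leaves (NT A) = []"
| "leaves (Cat a b) = leaves a @ leaves b"
| "leaves (Intc j a b) = leaves a @ leaves b"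

definition ground :: "('n, 'a) tm \<Rightarrow> bool" where
  "ground t \<longleftrightarrow> nts_of t = []"

fun val :: "('n, 'a) tm \<Rightarrow> 'a tuple" where
  "val (Tup u) = u"
| "val (NT A) = undefined"
| "val (Cat a b) = tcat (val a) (val b)"
| "val (Intc j a b) = tintc j (val a) (val b)"

record ('n, 'a) grammar =
  nts :: "'n set"
  rk :: "'n \<Rightarrow> nat"
  rules :: "('n \<times> ('n, 'a) tm) set"
  start :: 'n

text \<open>G is a k-DCFG over the alphabet Sig (including the standing assumption
  that leaf tuples of right-hand sides have length at most 1).\<close>
definition is_dcfg :: "nat \<Rightarrow> 'a set \<Rightarrow> ('n, 'a) grammar \<Rightarrow> bool" where
  "is_dcfg k Sig G \<longleftrightarrow>
     finite (nts G) \<and> start G \<in> nts G \<and> rk G (start G) = 0 \<and>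
     finite (rules G) \<and>
     (\<forall>(A, \<alpha>) \<in> rules G.
        A \<in> nts G \<and> correct k (rk G) \<alpha> \<and> rk G A = trank (rk G) \<alpha> \<and>
        set (nts_of \<alpha>) \<subseteq> nts G \<and>
        (\<forall>u \<in> set (leaves \<alpha>). tup_len u \<le> 1 \<and> (\<forall>w \<in> set u. set w \<subseteq> Sig)))"

inductive step :: "('n \<times> ('n, 'a) tm) set \<Rightarrow> ('n, 'a) tm \<Rightarrow> ('n, 'a) tm \<Rightarrow> bool"
  for P where
  rule: "(B, \<beta>) \<in> P \<Longrightarrow> step P (NT B) \<beta>"
| cat1: "step P a a' \<Longrightarrow> step P (Cat a b) (Cat a' b)"
| cat2: "step P b b' \<Longrightarrow> step P (Cat a b) (Cat a b')"
| intc1: "step P a a' \<Longrightarrow> step P (Intc j a b) (Intc j a' b)"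
| intc2: "step P b b' \<Longrightarrow> step P (Intc j a b) (Intc j a b')"

definition derives :: "('n, 'a) grammar \<Rightarrow> 'n \<Rightarrow> ('n, 'a) tm \<Rightarrow> bool" where
  "derives G A \<alpha> \<longleftrightarrow> (step (rules G))\<^sup>*\<^sup>* (NT A) \<alpha>"

definition lang_nt :: "('n, 'a) grammar \<Rightarrow> 'n \<Rightarrow> 'a tuple set" where
  "lang_nt G A = {val \<alpha> | \<alpha>. derives G A \<alpha> \<and> ground \<alpha>}"

definition lang :: "('n, 'a) grammar \<Rightarrow> 'a tuple set" where
  "lang G = lang_nt G (start G)"

definition linear_grammar :: "('n, 'a) grammar \<Rightarrow> bool" where
  "linear_grammar G \<longleftrightarrow> (\<forall>(A, \<alpha>) \<in> rules G. length (nts_of \<alpha>) \<le> 1)"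

definition nf_rule :: "('n, 'a) grammar \<Rightarrow> 'n \<times> ('n, 'a) tm \<Rightarrow> bool" where
  "nf_rule G r \<longleftrightarrow>
     (\<exists>A B u. A \<in> nts G \<and> B \<in> nts G \<and> tup_len u = 1 \<and>
        (r = (A, Cat (Tup u) (NT B)) \<or> r = (A, Cat (NT B) (Tup u)))) \<or>
     (\<exists>A B u j. A \<in> nts G \<and> B \<in> nts G \<and> tup_len u = 1 \<and>
        r = (A, Intc j (NT B) (Tup u))) \<or>
     (\<exists>A u. A \<in> nts G \<and> tup_len u = 1 \<and> r = (A, Tup u)) \<or>
     r = (start G, Tup [[]])"

definition normal_form :: "('n, 'a) grammar \<Rightarrow> bool" where
  "normal_form G \<longleftrightarrow> (\<forall>r \<in> rules G. nf_rule G r)"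

end

theory Submission
  imports Defs
begin

text \<open>The value of a linear right-hand side depends on the value \<open>z\<close> of its nonterminal
  through a template: a word over letters, separators and holes, hole \<open>i\<close> standing for the
  \<open>i\<close>-th component of \<open>z\<close>. The new nonterminals are pairs \<open>(B, T)\<close> of an old nonterminal
  and a template of bounded size, read as \<open>T\<close> filled with the values of \<open>B\<close>; the new rules
  are all normal-form rules that are sound for this reading, so no new tuples arise.
  Conversely, a template containing letters is shrunk one letter at a time by a rule
  \<open>u \<cdot> B\<close>, \<open>B \<cdot> u\<close> or \<open>B \<odot>\<^sub>j u\<close>, keeping all its segments nonempty and its rank at most \<open>k\<close>;
  a letter-free template is pushed through the next rule of an old derivation by substituting
  the segments of that rule's template for its holes and dropping holes of empty components.
  Unit rules never occur, since a state may use the rules of any state of the same rank whose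
  language is contained in its own.\<close>

section \<open>Linear derivations\<close>

fun val_with :: "('n, 'a) tm \<Rightarrow> 'a tuple \<Rightarrow> 'a tuple" where
  "val_with (Tup u) z = u"
| "val_with (NT B) z = z"
| "val_with (Cat a b) z = tcat (val_with a z) (val_with b z)"
| "val_with (Intc j a b) z = tintc j (val_with a z) (val_with b z)"

fun subst_nt :: "('n, 'a) tm \<Rightarrow> ('n, 'a) tm \<Rightarrow> ('n, 'a) tm" where
  "subst_nt (Tup u) c = Tup u"
| "subst_nt (NT B) c = c"
| "subst_nt (Cat a b) c = Cat (subst_nt a c) (subst_nt b c)"
| "subst_nt (Intc j a b) c = Intc j (subst_nt a c) (subst_nt b c)"

text \<open>A derivation in a linear grammar is a chain of rules, each rewriting the single
  nonterminal of the previous right-hand side; \<open>lgen\<close> reads such a chain bottom-up.\<close>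

inductive lgen :: "('n \<times> ('n, 'a) tm) set \<Rightarrow> 'n \<Rightarrow> 'a tuple \<Rightarrow> bool" for P where
  lgen_ground: "(A, \<alpha>) \<in> P \<Longrightarrow> nts_of \<alpha> = [] \<Longrightarrow> lgen P A (val \<alpha>)"
| lgen_step: "(A, \<alpha>) \<in> P \<Longrightarrow> nts_of \<alpha> = [B] \<Longrightarrow> lgen P B z \<Longrightarrow> lgen P A (val_with \<alpha> z)"

lemma val_with_ground: "nts_of t = [] \<Longrightarrow> val_with t z = val t"
  by (induction t) auto

lemma val_with_subst_nt: "val_with (subst_nt t c) z = val_with t (val_with c z)"
  by (induction t) auto

lemma subst_nt_ground: "nts_of t = [] \<Longrightarrow> subst_nt t c = t"
  by (induction t) auto

lemma subst_nt_self: "nts_of t = [B] \<Longrightarrow> subst_nt t (NT B) = t"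
  by (induction t) (auto simp: append_eq_Cons_conv subst_nt_ground)

lemma nts_of_subst_nt: "nts_of t = [B] \<Longrightarrow> nts_of (subst_nt t c) = nts_of c"
  by (induction t) (auto simp: append_eq_Cons_conv subst_nt_ground)

lemma val_subst_nt:
  "nts_of t = [B] \<Longrightarrow> nts_of c = [] \<Longrightarrow> val (subst_nt t c) = val_with t (val c)"
  by (metis nts_of_subst_nt val_with_ground val_with_subst_nt)

lemma step_nts_of_ne: "step P t t' \<Longrightarrow> nts_of t \<noteq> []"
  by (induction rule: step.induct) auto

lemma steps_from_ground: "(step P)\<^sup>*\<^sup>* t t' \<Longrightarrow> nts_of t = [] \<Longrightarrow> t' = t"
  by (induction rule: converse_rtranclp_induct) (auto dest: step_nts_of_ne)

lemma step_linear:
  "step P t t' \<Longrightarrow> length (nts_of t) \<le> 1 \<Longrightarrow> \<exists>B c. nts_of t = [B] \<and> (B, c) \<in> P \<and> t' = subst_nt t c"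
  by (induction rule: step.induct) (auto dest!: step_nts_of_ne simp: subst_nt_ground)

lemma step_subst_nt: "step P s s' \<Longrightarrow> nts_of t = [B] \<Longrightarrow> step P (subst_nt t s) (subst_nt t s')"
  by (induction t) (auto simp: append_eq_Cons_conv subst_nt_ground intro: step.intros)

lemma steps_subst_nt:
  "(step P)\<^sup>*\<^sup>* s s' \<Longrightarrow> nts_of t = [B] \<Longrightarrow> (step P)\<^sup>*\<^sup>* (subst_nt t s) (subst_nt t s')"
  by (induction rule: rtranclp_induct) (auto intro: rtranclp.rtrancl_into_rtrancl step_subst_nt)

lemma lgen_imp_derives: "lgen P A y \<Longrightarrow> \<exists>\<alpha>. (step P)\<^sup>*\<^sup>* (NT A) \<alpha> \<and> nts_of \<alpha> = [] \<and> val \<alpha> = y"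
proof (induction rule: lgen.induct)
  case (lgen_ground A \<alpha>)
  then show ?case by (auto intro: step.rule)
next
  case (lgen_step A \<alpha> B z)
  then obtain \<gamma> where \<gamma>: "(step P)\<^sup>*\<^sup>* (NT B) \<gamma>" "nts_of \<gamma> = []" "val \<gamma> = z" by auto
  have "(step P)\<^sup>*\<^sup>* \<alpha> (subst_nt \<alpha> \<gamma>)"
    using steps_subst_nt[OF \<gamma>(1) lgen_step(2)] subst_nt_self[OF lgen_step(2)] by simp
  then have "(step P)\<^sup>*\<^sup>* (NT A) (subst_nt \<alpha> \<gamma>)"
    using lgen_step(1) by (meson converse_rtranclp_into_rtranclp step.rule)
  moreover have "nts_of (subst_nt \<alpha> \<gamma>) = []" using nts_of_subst_nt[OF lgen_step(2)] \<gamma>(2) by simp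
  moreover have "val (subst_nt \<alpha> \<gamma>) = val_with \<alpha> z" using val_subst_nt lgen_step(2) \<gamma> by metis
  ultimately show ?case by blast
qed

lemma derives_imp_lgen:
  assumes "(step P)\<^sup>*\<^sup>* t \<alpha>" "nts_of \<alpha> = []" "\<forall>(A, \<beta>) \<in> P. length (nts_of \<beta>) \<le> 1"
    and "nts_of t = [B]"
  shows "\<exists>z. lgen P B z \<and> val \<alpha> = val_with t z"
  using assms(1,4)
proof (induction arbitrary: B rule: converse_rtranclp_induct)
  case base
  then show ?case using assms(2) by simp
next
  case (step t t')
  obtain c where c: "(B, c) \<in> P" "t' = subst_nt t c"
    using step_linear[OF step(1)] step.prems by auto
  have t': "nts_of t' = nts_of c" using c(2) nts_of_subst_nt step.prems by metis
  consider "nts_of c = []" | C where "nts_of c = [C]"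
    using assms(3) c(1) by (cases "nts_of c") auto
  then show ?case
  proof cases
    case 1
    then have "\<alpha> = t'" using step(2) t' steps_from_ground by metis
    then show ?thesis using c 1 lgen_ground val_subst_nt step.prems by metis
  next
    case (2 C)
    then obtain z where "lgen P C z" "val \<alpha> = val_with t' z" using step.IH t' by auto
    then show ?thesis using c 2 lgen_step val_with_subst_nt by metis
  qed
qed

lemma lang_nt_eq_lgen:
  assumes "linear_grammar G"
  shows "lang_nt G A = {y. lgen (rules G) A y}"
proof -
  have "lgen (rules G) A (val \<alpha>)" if "derives G A \<alpha>" "ground \<alpha>" for \<alpha>
    using derives_imp_lgen[of "rules G" "NT A" \<alpha> A] that assms
    by (auto simp: derives_def ground_def linear_grammar_def)
  then show ?thesis
    using lgen_imp_derives by (fastforce simp: lang_nt_def derives_def ground_def)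
qed
section \<open>Templates\<close>

text \<open>Filling hole \<open>i\<close> of a template with the \<open>i\<close>-th component of a tuple and cutting at the
  separators yields a tuple; \<open>flat\<close> reads a tuple back as a template without holes.\<close>

datatype 'a sym = Letter 'a | Sep | Hole nat

lemma sym_list_induct[case_names Nil Letter Sep Hole]:
  "P [] \<Longrightarrow> (\<And>a T. P T \<Longrightarrow> P (Letter a # T)) \<Longrightarrow> (\<And>T. P T \<Longrightarrow> P (Sep # T)) \<Longrightarrow>
   (\<And>i T. P T \<Longrightarrow> P (Hole i # T)) \<Longrightarrow> P T"
proof (induction T)
  case (Cons x T)
  then show ?case by (cases x) auto
qed

fun fill_sym :: "'a tuple \<Rightarrow> 'a sym \<Rightarrow> 'a sym list" where
  "fill_sym z (Letter a) = [Letter a]"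
| "fill_sym z Sep = [Sep]"
| "fill_sym z (Hole i) = map Letter (z ! i)"

definition fill :: "'a sym list \<Rightarrow> 'a tuple \<Rightarrow> 'a sym list" where
  "fill T z = concat (map (fill_sym z) T)"

lemma fill_Nil[simp]: "fill [] z = []"
  and fill_Cons[simp]: "fill (x # T) z = fill_sym z x @ fill T z"
  and fill_append[simp]: "fill (T @ U) z = fill T z @ fill U z"
  by (auto simp: fill_def)

fun join_segs :: "'a sym list list \<Rightarrow> 'a sym list" where
  "join_segs [] = []"
| "join_segs [c] = c"
| "join_segs (c # d # cs) = c @ Sep # join_segs (d # cs)"

definition nseps :: "'a sym list \<Rightarrow> nat" where
  "nseps s = length (filter (\<lambda>x. x = Sep) s)"

lemma nseps_simps[simp]:
  "nseps [] = 0" "nseps (Sep # s) = Suc (nseps s)" "nseps (Letter a # s) = nseps s"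
  "nseps (Hole i # s) = nseps s" "nseps (s @ t) = nseps s + nseps t"
  by (auto simp: nseps_def)

definition holes_of :: "'a sym list \<Rightarrow> nat list" where
  "holes_of s = concat (map (\<lambda>x. case x of Hole i \<Rightarrow> [i] | _ \<Rightarrow> []) s)"

lemma holes_of_simps[simp]:
  "holes_of [] = []" "holes_of (Sep # s) = holes_of s" "holes_of (Letter a # s) = holes_of s"
  "holes_of (Hole i # s) = i # holes_of s" "holes_of (s @ t) = holes_of s @ holes_of t"
  by (auto simp: holes_of_def)

fun is_letter :: "'a sym \<Rightarrow> bool" where
  "is_letter (Letter a) = True" | "is_letter _ = False"

definition nletters :: "'a sym list \<Rightarrow> nat" where
  "nletters s = length (filter is_letter s)"

lemma nletters_simps[simp]:
  "nletters [] = 0" "nletters (Sep # s) = nletters s" "nletters (Letter a # s) = Suc (nletters s)"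
  "nletters (Hole i # s) = nletters s" "nletters (s @ t) = nletters s + nletters t"
  by (auto simp: nletters_def)

lemma join_segs_Cons: "ys \<noteq> [] \<Longrightarrow> join_segs (x # ys) = x @ Sep # join_segs ys"
  by (cases ys) auto

lemma join_segs_append:
  "xs \<noteq> [] \<Longrightarrow> ys \<noteq> [] \<Longrightarrow> join_segs (xs @ ys) = join_segs xs @ Sep # join_segs ys"
  by (induction xs rule: join_segs.induct) (auto simp: join_segs_Cons)

lemma join_segs_merge: "join_segs (xs @ [a]) @ join_segs (b # ys) = join_segs (xs @ [a @ b] @ ys)"
proof (induction xs)
  case Nil
  then show ?case by (cases ys) auto
next
  case (Cons x xs)
  then show ?case by (simp add: join_segs_Cons)
qed

lemma nseps_join_segs: "(\<forall>c\<in>set cs. Sep \<notin> set c) \<Longrightarrow> nseps (join_segs cs) = length cs - 1"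
proof (induction cs rule: join_segs.induct)
  case (2 c)
  then show ?case by (auto simp: nseps_def filter_empty_conv)
next
  case (3 c d cs)
  then show ?case by (auto simp: nseps_def filter_empty_conv)
qed auto

lemma fill_join_segs: "fill (join_segs cs) z = join_segs (map (\<lambda>c. fill c z) cs)"
  by (induction cs rule: join_segs.induct) auto

lemma holes_of_join_segs: "holes_of (join_segs cs) = concat (map holes_of cs)"
  by (induction cs rule: join_segs.induct) auto

lemma nletters_join_segs: "nletters (join_segs cs) = sum_list (map nletters cs)"
  by (induction cs rule: join_segs.induct) auto

definition flat :: "'a tuple \<Rightarrow> 'a sym list" where
  "flat z = join_segs (map (map Letter) z)"

lemma nseps_flat: "nseps (flat z) = length z - 1"
  unfolding flat_def by (subst nseps_join_segs) auto

lemma holes_of_flat[simp]: "holes_of (flat z) = []"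
  unfolding flat_def holes_of_join_segs by (auto simp: holes_of_def)

lemma fill_flat[simp]: "fill (flat u) z = flat u"
proof -
  have "fill (map Letter w) z = map Letter w" for w :: "'a list" by (induction w) auto
  then show ?thesis unfolding flat_def fill_join_segs by (simp add: comp_def)
qed

lemma flat_append: "xs \<noteq> [] \<Longrightarrow> ys \<noteq> [] \<Longrightarrow> flat (xs @ ys) = flat xs @ Sep # flat ys"
  unfolding flat_def by (simp add: join_segs_append)

lemma tcat_ne: "tcat x y \<noteq> []"
  by (simp add: tcat_def)

lemma length_tcat: "x \<noteq> [] \<Longrightarrow> y \<noteq> [] \<Longrightarrow> length (tcat x y) = length x + length y - 1"
  by (cases y) (auto simp: tcat_def)

lemma flat_tcat:
  assumes "x \<noteq> []" "y \<noteq> []"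
  shows "flat (tcat x y) = flat x @ flat y"
proof -
  let ?xs = "map (map Letter) (butlast x)" and ?ys = "map (map Letter) (tl y)"
  have x: "x = butlast x @ [last x]" and y: "y = hd y # tl y" using assms by simp_all
  have "flat x @ flat y =
    join_segs (?xs @ [map Letter (last x)]) @ join_segs (map Letter (hd y) # ?ys)"
    unfolding flat_def by (subst x, subst y, simp)
  also have "\<dots> = join_segs (?xs @ [map Letter (last x) @ map Letter (hd y)] @ ?ys)"
    by (rule join_segs_merge)
  also have "\<dots> = flat (tcat x y)" by (simp add: flat_def tcat_def)
  finally show ?thesis by simp
qed

fun replace_sep :: "nat \<Rightarrow> 'a sym list \<Rightarrow> 'a sym list \<Rightarrow> 'a sym list" where
  "replace_sep n [] V = []"
| "replace_sep n (x # U) V =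
     (if x = Sep then (if n = 1 then V @ U else Sep # replace_sep (n - 1) U V)
      else x # replace_sep n U V)"

lemma replace_sep_split: "nseps p + 1 = n \<Longrightarrow> replace_sep n (p @ Sep # q) V = p @ V @ q"
proof (induction p arbitrary: n)
  case (Cons x p)
  then show ?case by (cases x) auto
qed auto

lemma split_at_sep:
  assumes "1 \<le> n" "n \<le> nseps U"
  obtains p q where "U = p @ Sep # q" "nseps p + 1 = n"
  using assms
proof (induction U arbitrary: n thesis)
  case (Cons x U)
  show ?case
  proof (cases "x = Sep \<and> n = 1")
    case True
    then show ?thesis using Cons.prems(1)[of "[]" U] by simp
  next
    case False
    then have "1 \<le> (if x = Sep then n - 1 else n)" "(if x = Sep then n - 1 else n) \<le> nseps U"
      using Cons.prems(2,3) by (cases x; auto)+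
    then obtain p q where "U = p @ Sep # q" "nseps p + 1 = (if x = Sep then n - 1 else n)"
      using Cons.IH by blast
    then show ?thesis using Cons.prems(1)[of "x # p" q] False by (cases x) auto
  qed
qed simp

lemma map_Letter_counts[simp]:
  "nseps (map Letter w) = 0" "holes_of (map Letter w) = []" "nletters (map Letter w) = length w"
  by (induction w) auto

lemma nseps_fill_sym[simp]: "nseps (fill_sym z x) = (if x = Sep then 1 else 0)"
  by (cases x) (auto simp: nseps_def filter_empty_conv)

lemma nseps_fill[simp]: "nseps (fill T z) = nseps T"
  by (induction T rule: sym_list_induct) auto

lemma fill_replace_sep:
  "1 \<le> n \<Longrightarrow> n \<le> nseps U \<Longrightarrow> fill (replace_sep n U V) z = replace_sep n (fill U z) (fill V z)"
  by (erule (1) split_at_sep) (simp add: replace_sep_split)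

lemma holes_of_replace_sep:
  "1 \<le> n \<Longrightarrow> n \<le> nseps U \<Longrightarrow> holes_of U = [] \<or> holes_of V = [] \<Longrightarrow>
   holes_of (replace_sep n U V) = holes_of U @ holes_of V"
  by (erule (1) split_at_sep) (auto simp: replace_sep_split)

lemma nseps_replace_sep:
  "1 \<le> n \<Longrightarrow> n \<le> nseps U \<Longrightarrow> nseps (replace_sep n U V) = nseps U + nseps V - 1"
  by (erule (1) split_at_sep) (simp add: replace_sep_split)

lemma set_replace_sep: "set (replace_sep n U V) \<subseteq> set U \<union> set V"
  by (induction n U V rule: replace_sep.induct) auto

lemma flat_tintc:
  assumes "1 \<le> j" "j < length x" "y \<noteq> []"
  shows "flat (tintc j x y) = replace_sep j (flat x) (flat y)"
proof -
  have t: "take j x \<noteq> []" and d: "drop j x \<noteq> []" using assms by auto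
  have "flat x = flat (take j x) @ Sep # flat (drop j x)"
    using flat_append[OF t d] by simp
  moreover have "nseps (flat (take j x)) + 1 = j" using assms by (simp add: nseps_flat)
  ultimately show ?thesis
    unfolding tintc_def using t d assms(3) by (simp add: flat_tcat tcat_ne replace_sep_split)
qed

lemma length_tintc:
  assumes "1 \<le> j" "j < length x" "y \<noteq> []"
  shows "length (tintc j x y) = length x + length y - 2"
proof -
  have "take j x \<noteq> []" using assms by auto
  then have "length (tcat (take j x) y) = j + length y - 1" using assms by (simp add: length_tcat)
  then show ?thesis unfolding tintc_def using assms by (simp add: length_tcat tcat_ne)
qed

definition hole_template :: "nat \<Rightarrow> 'a sym list" where
  "hole_template r = join_segs (map (\<lambda>i. [Hole i]) [0..<Suc r])"

lemma fill_hole_template: "length z = Suc r \<Longrightarrow> fill (hole_template r) z = flat z"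
proof -
  assume l: "length z = Suc r"
  have "map (\<lambda>c. fill c z) (map (\<lambda>i. [Hole i]) [0..<Suc r]) =
        map (\<lambda>i. map Letter (z ! i)) [0..<length z]"
    using l by simp
  also have "\<dots> = map (map Letter) z" by (rule nth_equalityI) auto
  finally show ?thesis unfolding hole_template_def fill_join_segs flat_def by simp
qed

lemma nseps_hole_template[simp]: "nseps (hole_template r) = r"
  unfolding hole_template_def by (subst nseps_join_segs) auto

lemma holes_of_hole_template[simp]: "holes_of (hole_template r) = [0..<Suc r]"
  unfolding hole_template_def holes_of_join_segs by (induction r) auto

text \<open>The value of a term as a function of the common value of its nonterminal occurrences.\<close>

fun template :: "('n \<Rightarrow> nat) \<Rightarrow> ('n, 'a) tm \<Rightarrow> 'a sym list" where
  "template rf (Tup u) = flat u"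
| "template rf (NT B) = hole_template (rf B)"
| "template rf (Cat a b) = template rf a @ template rf b"
| "template rf (Intc j a b) = replace_sep j (template rf a) (template rf b)"

lemma nseps_template: "correct k rf \<alpha> \<Longrightarrow> nseps (template rf \<alpha>) = trank rf \<alpha>"
  by (induction \<alpha>) (auto simp: tup_rank_def nseps_flat nseps_replace_sep)

lemma holes_of_template:
  "correct k rf \<alpha> \<Longrightarrow> length (nts_of \<alpha>) \<le> 1 \<Longrightarrow>
   holes_of (template rf \<alpha>) = concat (map (\<lambda>B. [0..<Suc (rf B)]) (nts_of \<alpha>))"
proof (induction \<alpha>)
  case (Intc j a b)
  then have "holes_of (template rf a) = [] \<or> holes_of (template rf b) = []"
    by (cases "nts_of a") auto
  moreover have "1 \<le> j" "j \<le> nseps (template rf a)" using Intc.prems by (auto simp: nseps_template)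
  ultimately show ?case using Intc by (simp add: holes_of_replace_sep del: upt_Suc)
qed (auto simp del: upt_Suc)

lemma val_with_template:
  "correct k rf \<alpha> \<Longrightarrow> \<forall>B \<in> set (nts_of \<alpha>). length z = Suc (rf B) \<Longrightarrow>
   length (val_with \<alpha> z) = Suc (trank rf \<alpha>) \<and> flat (val_with \<alpha> z) = fill (template rf \<alpha>) z"
proof (induction \<alpha>)
  case (Tup u)
  then show ?case by (simp add: tup_rank_def)
next
  case (NT B)
  then show ?case by (simp add: fill_hole_template)
next
  case (Cat a b)
  then have "val_with a z \<noteq> []" "val_with b z \<noteq> []" by auto
  with Cat show ?case by (auto simp: length_tcat flat_tcat)
next
  case (Intc j a b)
  then have "j \<le> nseps (template rf a)" "val_with b z \<noteq> []" by (auto simp: nseps_template)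
  with Intc show ?case by (auto simp: length_tintc flat_tintc fill_replace_sep)
qed

lemma set_join_segs: "x \<noteq> Sep \<Longrightarrow> x \<in> set (join_segs cs) \<longleftrightarrow> (\<exists>c\<in>set cs. x \<in> set c)"
  by (induction cs rule: join_segs.induct) auto

lemma Letter_in_flat: "Letter a \<in> set (flat z) \<longleftrightarrow> (\<exists>w\<in>set z. a \<in> set w)"
  unfolding flat_def by (subst set_join_segs) auto

lemma template_letters:
  "Letter a \<in> set (template rf \<alpha>) \<Longrightarrow> \<exists>u\<in>set (leaves \<alpha>). \<exists>w\<in>set u. a \<in> set w"
proof (induction \<alpha>)
  case (Tup u)
  then show ?case by (simp add: Letter_in_flat)
next
  case (NT B)
  then show ?case by (auto simp: hole_template_def set_join_segs)
next
  case (Intc j a b)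
  then show ?case using set_replace_sep by fastforce
qed auto

lemma mem_holes_of: "j \<in> set (holes_of T) \<longleftrightarrow> Hole j \<in> set T"
  by (induction T rule: sym_list_induct) auto

lemma nletters_eq_0_iff: "nletters T = 0 \<longleftrightarrow> (\<forall>a. Letter a \<notin> set T)"
  by (induction T rule: sym_list_induct) auto

lemma fill_eq_Nil_iff: "fill c z = [] \<longleftrightarrow> (\<forall>x\<in>set c. \<exists>i. x = Hole i \<and> z ! i = [])"
  by (induction c rule: sym_list_induct) auto

lemma fill_no_holes: "holes_of T = [] \<Longrightarrow> fill T z = T"
  by (induction T rule: sym_list_induct) auto

lemma holes_of_fill: "holes_of (fill T z) = []"
  by (induction T rule: sym_list_induct) auto

lemma Letter_in_fill:
  "Letter a \<in> set (fill T z) \<Longrightarrow> \<forall>i\<in>set (holes_of T). i < length z \<Longrightarrow>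
   Letter a \<in> set T \<or> (\<exists>w\<in>set z. a \<in> set w)"
proof (induction T)
  case (Cons x T)
  show ?case
  proof (cases x)
    case (Hole i)
    then show ?thesis using Cons by (cases "a \<in> set (z ! i)") auto
  qed (use Cons in auto)
qed simp

lemma nletters_fill: "nletters (fill T z) =
  nletters T + sum_list (map (\<lambda>i. length (z ! i)) (holes_of T))"
  by (induction T rule: sym_list_induct) auto

lemma nletters_flat: "nletters (flat z) = tup_len z"
  unfolding flat_def tup_len_def nletters_join_segs by (simp add: comp_def)

lemma length_eq_counts: "length T = nletters T + nseps T + length (holes_of T)"
  by (induction T rule: sym_list_induct) auto

fun segs :: "'a sym list \<Rightarrow> 'a sym list list" where
  "segs [] = [[]]"
| "segs (x # xs) = (if x = Sep then [] # segs xs else (x # hd (segs xs)) # tl (segs xs))"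

lemma segs_ne[simp]: "segs s \<noteq> []"
  by (induction s) auto

lemma join_segs_Cons_Cons: "join_segs ((x # c) # cs) = x # join_segs (c # cs)"
  by (cases cs) auto

lemma join_segs_segs[simp]: "join_segs (segs s) = s"
proof (induction s)
  case (Cons x s)
  then show ?case
    using join_segs_Cons_Cons[of x "hd (segs s)" "tl (segs s)"] by (simp add: join_segs_Cons)
qed simp

lemma Sep_notin_segs: "c \<in> set (segs s) \<Longrightarrow> Sep \<notin> set c"
proof (induction s arbitrary: c)
  case (Cons x s)
  then show ?case by (cases "segs s") (auto split: if_splits)
qed simp

lemma set_segs: "c \<in> set (segs s) \<Longrightarrow> set c \<subseteq> set s"
proof (induction s arbitrary: c)
  case (Cons x s)
  then show ?case by (cases "segs s") (force split: if_splits)+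
qed simp

lemma segs_no_Sep: "Sep \<notin> set c \<Longrightarrow> segs c = [c]"
  by (induction c) auto

lemma segs_append_Sep: "Sep \<notin> set c \<Longrightarrow> segs (c @ Sep # r) = c # segs r"
  by (induction c) auto

lemma segs_join_segs: "cs \<noteq> [] \<Longrightarrow> \<forall>c\<in>set cs. Sep \<notin> set c \<Longrightarrow> segs (join_segs cs) = cs"
  by (induction cs rule: join_segs.induct) (auto simp: segs_no_Sep segs_append_Sep)

lemma length_segs: "length (segs s) = Suc (nseps s)"
proof (induction s)
  case (Cons x s)
  then show ?case by (cases "segs s"; cases x) auto
qed simp

lemma segs_flat: "z \<noteq> [] \<Longrightarrow> segs (flat z) = map (map Letter) z"
  unfolding flat_def by (rule segs_join_segs) auto

lemma Sep_notin_fill: "Sep \<notin> set c \<Longrightarrow> Sep \<notin> set (fill c z)"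
  by (induction c rule: sym_list_induct) auto

lemma segs_fill: "segs (fill T z) = map (\<lambda>c. fill c z) (segs T)"
proof -
  have "segs (fill T z) = segs (join_segs (map (\<lambda>c. fill c z) (segs T)))"
    by (metis fill_join_segs join_segs_segs)
  also have "\<dots> = map (\<lambda>c. fill c z) (segs T)"
    by (rule segs_join_segs) (auto simp: Sep_notin_fill Sep_notin_segs)
  finally show ?thesis .
qed

lemma flat_inj: "length x = length y \<Longrightarrow> flat x = flat y \<Longrightarrow> x = y"
proof (cases "x = []")
  case False
  assume "length x = length y" "flat x = flat y"
  moreover have "y \<noteq> []" using False \<open>length x = length y\<close> by auto
  ultimately have "map (map Letter) x = map (map Letter) y"
    using segs_flat[of x] segs_flat[of y] False by metis
  moreover have "inj (map Letter)" by (simp add: inj_on_def)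
  ultimately show "x = y" by (metis list.inj_map_strong inj_eq)
qed simp

definition nonempty_segs :: "'a sym list \<Rightarrow> bool" where
  "nonempty_segs s \<longleftrightarrow> [] \<notin> set (segs s)"

lemma nonempty_segs_join_segs:
  "cs \<noteq> [] \<Longrightarrow> \<forall>c\<in>set cs. c \<noteq> [] \<and> Sep \<notin> set c \<Longrightarrow> nonempty_segs (join_segs cs)"
  unfolding nonempty_segs_def by (subst segs_join_segs) auto

lemma nonempty_segs_fill:
  assumes "nonempty_segs T" and "\<forall>j. Hole j \<in> set T \<longrightarrow> z ! j \<noteq> []"
  shows "nonempty_segs (fill T z)"
proof -
  have "fill c z \<noteq> []" if c: "c \<in> set (segs T)" for c
  proof -
    have "c \<noteq> []" using c assms(1) by (auto simp: nonempty_segs_def)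
    then obtain x c' where x: "c = x # c'" by (cases c) auto
    then have "x \<in> set T" "x \<noteq> Sep" using c set_segs Sep_notin_segs by fastforce+
    with x assms(2) show ?thesis by (cases x) auto
  qed
  then show ?thesis unfolding nonempty_segs_def segs_fill by (metis (lifting) imageE set_map)
qed

lemma nonempty_segs_of_fill: "nonempty_segs (fill T z) \<Longrightarrow> nonempty_segs T"
  unfolding nonempty_segs_def segs_fill by force

fun unLetter :: "'a sym \<Rightarrow> 'a" where
  "unLetter (Letter a) = a"
| "unLetter _ = undefined"

definition unflat :: "'a sym list \<Rightarrow> 'a tuple" where
  "unflat s = map (map unLetter) (segs s)"

lemma flat_unflat:
  assumes "holes_of s = []"
  shows "flat (unflat s) = s"
proof -
  have "map Letter (map unLetter c) = c" if c: "c \<in> set (segs s)" for c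
  proof -
    have "\<exists>a. x = Letter a" if "x \<in> set c" for x
    proof -
      have x: "x \<in> set s" "x \<noteq> Sep" using that c set_segs Sep_notin_segs by blast+
      have no_holes: "Hole i \<notin> set s" for i using assms mem_holes_of[of i s] by simp
      show ?thesis by (cases x) (use x no_holes in auto)
    qed
    then have "Letter (unLetter x) = x" if "x \<in> set c" for x using that by force
    then show ?thesis by (simp add: map_idI)
  qed
  then have "map (map Letter) (map (map unLetter) (segs s)) = segs s"
    by (simp add: map_idI)
  then show ?thesis unfolding flat_def unflat_def by simp
qed

lemma length_unflat: "length (unflat s) = Suc (nseps s)"
  unfolding unflat_def by (simp add: length_segs)

definition compose :: "'a sym list \<Rightarrow> 'a sym list list \<Rightarrow> 'a sym list" where
  "compose T cs = concat (map (\<lambda>x. case x of Hole j \<Rightarrow> cs ! j | y \<Rightarrow> [y]) T)"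

lemma compose_simps[simp]:
  "compose [] cs = []" "compose (Sep # T) cs = Sep # compose T cs"
  "compose (Letter a # T) cs = Letter a # compose T cs"
  "compose (Hole j # T) cs = cs ! j @ compose T cs"
  by (auto simp: compose_def)

lemma set_compose:
  "x \<in> set (compose T cs) \<Longrightarrow> x \<in> set T \<and> (\<forall>j. x \<noteq> Hole j) \<or> (\<exists>j. Hole j \<in> set T \<and> x \<in> set (cs ! j))"
  by (induction T rule: sym_list_induct) auto

lemma fill_compose:
  "\<forall>j. Hole j \<in> set T \<longrightarrow> map Letter (Z ! j) = fill (cs ! j) z \<Longrightarrow> fill T Z = fill (compose T cs) z"
  by (induction T rule: sym_list_induct) auto

lemma holes_of_compose: "holes_of (compose T cs) =
  concat (map (\<lambda>j. holes_of (cs ! j)) (holes_of T))"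
  by (induction T rule: sym_list_induct) auto

lemma nseps_compose: "nseps (compose T cs) =
  nseps T + sum_list (map (\<lambda>j. nseps (cs ! j)) (holes_of T))"
  by (induction T rule: sym_list_induct) auto

lemma nletters_compose:
  "nletters (compose T cs) = nletters T + sum_list (map (\<lambda>j. nletters (cs ! j)) (holes_of T))"
  by (induction T rule: sym_list_induct) auto

lemma map_nth_upt: "map (\<lambda>j. f (xs ! j)) [0..<length xs] = map f xs"
  by (rule nth_equalityI) auto

lemma filter_concat_filter:
  "\<forall>x\<in>set xs. \<not> P x \<longrightarrow> filter Q (f x) = [] \<Longrightarrow>
   filter Q (concat (map f (filter P xs))) = filter Q (concat (map f xs))"
  by (induction xs) auto

lemma sum_list_filter_le: "sum_list (map (f :: _ \<Rightarrow> nat) (filter P xs)) \<le> sum_list (map f xs)"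
  by (induction xs) auto

fun keep_hole :: "'a tuple \<Rightarrow> 'a sym \<Rightarrow> bool" where
  "keep_hole z (Hole i) = (z ! i \<noteq> [])"
| "keep_hole z x = True"

lemma fill_filter_keep_hole:
  "\<forall>i. Hole i \<in> set X \<longrightarrow> z ! i = [] \<longrightarrow> z'' ! i = [] \<Longrightarrow> fill (filter (keep_hole z) X) z'' = fill X z''"
  by (induction X rule: sym_list_induct) auto

lemma holes_of_filter_keep_hole: "holes_of (filter (keep_hole z) X) =
  filter (\<lambda>i. z ! i \<noteq> []) (holes_of X)"
  by (induction X rule: sym_list_induct) auto

lemma nseps_filter_keep_hole: "nseps (filter (keep_hole z) X) = nseps X"
  by (induction X rule: sym_list_induct) auto

lemma nletters_filter_le: "nletters (filter P X) \<le> nletters X"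
  by (induction X rule: sym_list_induct) auto

text \<open>Let \<open>C\<close> be the template of a rule, so that \<open>z\<close> below is the value of its right-hand side
  when its nonterminal has value \<open>z'\<close>, and let \<open>T\<close> be a letter-free template with holes at
  the nonempty components of \<open>z\<close>. Substituting for each hole of \<open>T\<close> the corresponding segment
  of \<open>C\<close> and dropping holes for empty components of \<open>z'\<close> gives a template over \<open>z'\<close>
  with the same value.\<close>

definition descend :: "'a sym list \<Rightarrow> 'a sym list \<Rightarrow> 'a tuple \<Rightarrow> 'a sym list" where
  "descend C T z' = filter (keep_hole z') (compose T (segs C))"

locale descent =
  fixes C T :: "'a sym list" and z z' :: "'a tuple"
  assumes flat_z: "flat z = fill C z'"
    and z_ne: "z \<noteq> []"
    and holes_C: "holes_of C = [0..<length z']"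
    and holes_T: "holes_of T = filter (\<lambda>i. z ! i \<noteq> []) [0..<length z]"
begin

lemma segs_template_fill: "map (map Letter) z = map (\<lambda>c. fill c z') (segs C)"
  using flat_z z_ne by (metis segs_fill segs_flat)

lemma length_segs_template: "length (segs C) = length z"
  using segs_template_fill by (metis length_map)

lemma nth_segs_template: "j < length z \<Longrightarrow> map Letter (z ! j) = fill (segs C ! j) z'"
  using segs_template_fill length_segs_template by (metis nth_map)

lemma Hole_in_T: "Hole j \<in> set T \<Longrightarrow> j < length z \<and> z ! j \<noteq> []"
  using holes_T mem_holes_of[of j T] by simp

lemma Hole_in_C: "Hole i \<in> set C \<Longrightarrow> i < length z'"
  using holes_C mem_holes_of[of i C] by simp

lemma Hole_in_segs_template: "j < length z \<Longrightarrow> Hole i \<in> set (segs C ! j) \<Longrightarrow> i < length z'"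
  using Hole_in_C set_segs length_segs_template by (metis nth_mem subsetD)

lemma empty_component:
  "j < length z \<Longrightarrow> z ! j = [] \<Longrightarrow> x \<in> set (segs C ! j) \<Longrightarrow> \<exists>i. x = Hole i \<and> z' ! i = []"
  using nth_segs_template fill_eq_Nil_iff by (metis map_is_Nil_conv)

lemma holes_of_descend: "holes_of (descend C T z') = filter (\<lambda>i. z' ! i \<noteq> []) [0..<length z']"
proof -
  let ?P = "\<lambda>i. z' ! i \<noteq> []" and ?cs = "segs C"
  have "holes_of (descend C T z') = filter ?P (concat (map (\<lambda>j. holes_of (?cs ! j)) (holes_of T)))"
    by (simp add: descend_def holes_of_filter_keep_hole holes_of_compose)
  also have "\<dots> = filter ?P (concat (map (\<lambda>j. holes_of (?cs ! j)) [0..<length z]))"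
    unfolding holes_T
  proof (rule filter_concat_filter, intro ballI impI)
    fix j assume j: "j \<in> set [0..<length z]" "\<not> z ! j \<noteq> []"
    have "z' ! i = []" if "i \<in> set (holes_of (?cs ! j))" for i
      using that j empty_component[of j "Hole i"] by (auto simp: mem_holes_of)
    then show "filter ?P (holes_of (?cs ! j)) = []" by (simp add: filter_empty_conv)
  qed
  also have "map (\<lambda>j. holes_of (?cs ! j)) [0..<length z] = map holes_of ?cs"
    using map_nth_upt[of _ ?cs] length_segs_template by simp
  also have "concat (map holes_of ?cs) = holes_of C"
    by (metis holes_of_join_segs join_segs_segs)
  finally show ?thesis using holes_C by simp
qed

lemma nseps_descend: "nseps (descend C T z') = nseps T"
proof -
  have "nseps (segs C ! j) = 0" if "Hole j \<in> set T" for j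
  proof -
    have "segs C ! j \<in> set (segs C)" using that Hole_in_T length_segs_template by simp
    then show ?thesis using Sep_notin_segs by (force simp: nseps_def filter_empty_conv)
  qed
  then show ?thesis
    by (simp add: descend_def nseps_filter_keep_hole nseps_compose mem_holes_of)
qed

lemma nletters_descend: "nletters T = 0 \<Longrightarrow> nletters (descend C T z') \<le> nletters C"
proof -
  assume "nletters T = 0"
  let ?cs = "segs C"
  have "nletters (descend C T z') \<le> nletters (compose T ?cs)"
    unfolding descend_def by (rule nletters_filter_le)
  also have "\<dots> = sum_list (map (\<lambda>j. nletters (?cs ! j)) (holes_of T))"
    using \<open>nletters T = 0\<close> by (simp add: nletters_compose)
  also have "\<dots> \<le> sum_list (map (\<lambda>j. nletters (?cs ! j)) [0..<length z])"
    unfolding holes_T by (rule sum_list_filter_le)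
  also have "map (\<lambda>j. nletters (?cs ! j)) [0..<length z] = map nletters ?cs"
    using map_nth_upt[of _ ?cs] length_segs_template by simp
  also have "sum_list (map nletters ?cs) = nletters C"
    by (metis nletters_join_segs join_segs_segs)
  finally show ?thesis .
qed

lemma set_descend: "nletters T = 0 \<Longrightarrow> set (descend C T z') \<subseteq> insert Sep (set C)"
proof
  fix x assume T: "nletters T = 0" and "x \<in> set (descend C T z')"
  then have "x \<in> set (compose T (segs C))" by (simp add: descend_def)
  then consider "x \<in> set T" "\<forall>j. x \<noteq> Hole j" | j where "Hole j \<in> set T" "x \<in> set (segs C ! j)"
    using set_compose by blast
  then show "x \<in> insert Sep (set C)"
  proof cases
    case 1
    have "\<forall>a. x \<noteq> Letter a" using 1(1) T by (auto simp: nletters_eq_0_iff)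
    then show ?thesis by (cases x) (use 1(2) in auto)
  next
    case 2
    then have "segs C ! j \<in> set (segs C)" using Hole_in_T length_segs_template by simp
    with 2 show ?thesis using set_segs by blast
  qed
qed

lemma fill_descend_transfer:
  assumes l: "length z'' = length z'"
    and c: "\<forall>i<length z''. Hole i \<notin> set (descend C T z') \<longrightarrow> z'' ! i = []"
    and fZ: "flat Z = fill C z''" and Z_ne: "Z \<noteq> []"
  shows "fill (descend C T z') z'' = fill T Z \<and> (\<forall>j<length Z. Hole j \<notin> set T \<longrightarrow> Z ! j = [])"
proof -
  let ?cs = "segs C" and ?W = "descend C T z'"
  have fZ': "map (map Letter) Z = map (\<lambda>c. fill c z'') ?cs"
    using fZ Z_ne by (metis segs_fill segs_flat)
  then have lZ: "length Z = length z"
    using length_segs_template by (metis length_map)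
  have nthZ: "j < length z \<Longrightarrow> map Letter (Z ! j) = fill (?cs ! j) z''" for j
    using fZ' lZ length_segs_template by (metis nth_map)
  have dropped: "z'' ! i = []" if "j < length z" "Hole i \<in> set (?cs ! j)" "z' ! i = []" for i j
    using that c l Hole_in_segs_template by (auto simp: descend_def)
  have "fill T Z = fill (compose T ?cs) z''"
    by (rule fill_compose) (use Hole_in_T nthZ in blast)
  also have "\<dots> = fill ?W z''"
    unfolding descend_def
  proof (rule fill_filter_keep_hole[symmetric], intro allI impI)
    fix i assume "Hole i \<in> set (compose T ?cs)" "z' ! i = []"
    then show "z'' ! i = []" using set_compose[of "Hole i"] Hole_in_T dropped by blast
  qed
  moreover have "Z ! j = []" if "j < length Z" "Hole j \<notin> set T" for j
  proof -
    have "z ! j = []" using that holes_T lZ mem_holes_of by fastforce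
    then have "fill (?cs ! j) z'' = []"
      using that lZ empty_component dropped by (fastforce simp: fill_eq_Nil_iff)
    then show ?thesis using nthZ that lZ by (metis map_is_Nil_conv)
  qed
  ultimately show ?thesis by simp
qed

lemma fill_descend: "fill (descend C T z') z' = fill T z"
proof -
  have "\<forall>i<length z'. Hole i \<notin> set (descend C T z') \<longrightarrow> z' ! i = []"
    using holes_of_descend mem_holes_of by fastforce
  then show ?thesis using fill_descend_transfer[OF refl _ flat_z z_ne] by blast
qed

lemma nonempty_segs_descend: "nonempty_segs T \<Longrightarrow> nonempty_segs (descend C T z')"
proof -
  assume "nonempty_segs T"
  then have "nonempty_segs (fill T z)" using Hole_in_T by (intro nonempty_segs_fill) auto
  then have "nonempty_segs (fill (descend C T z') z')" by (simp add: fill_descend)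
  then show ?thesis by (rule nonempty_segs_of_fill)
qed

end

text \<open>\<open>peels_to T T' u\<close>: a nonterminal for template \<open>T'\<close> yields one for \<open>T\<close> by one of the
  normal-form rules \<open>u \<cdot> B\<close>, \<open>B \<cdot> u\<close> and \<open>B \<odot>\<^sub>j u\<close>.\<close>

definition peels_to :: "'a sym list \<Rightarrow> 'a sym list \<Rightarrow> 'a tuple \<Rightarrow> bool" where
  "peels_to T T' u \<longleftrightarrow> tup_len u = 1 \<and>
     (T = flat u @ T' \<or> T = T' @ flat u \<or> (\<exists>P Q. T' = P @ Sep # Q \<and> T = P @ flat u @ Q))"

lemma flat_unit_tuples[simp]:
  "flat [[a]] = [Letter a]" "flat [[a],[]] = [Letter a, Sep]" "flat [[],[a]] = [Sep, Letter a]"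
  "flat [[],[a],[]] = [Sep, Letter a, Sep]"
  by (auto simp: flat_def)

lemma peels_to_counts:
  assumes "peels_to T T' u"
  shows "holes_of T' = holes_of T" "set T' \<subseteq> insert Sep (set T)" "length T' \<le> length T"
    "nletters T = Suc (nletters T')" "nseps (flat u) \<le> nseps T" "set (flat u) \<subseteq> set T"
proof -
  have "nletters (flat u) = 1" "holes_of (flat u) = []" "u \<noteq> []"
    using assms by (auto simp: peels_to_def nletters_flat tup_len_def)
  then have "1 \<le> length (flat u)" by (auto simp: length_eq_counts[of "flat u"])
  with assms \<open>nletters (flat u) = 1\<close> \<open>holes_of (flat u) = []\<close>
  show "holes_of T' = holes_of T" "set T' \<subseteq> insert Sep (set T)" "length T' \<le> length T"
    "nletters T = Suc (nletters T')" "nseps (flat u) \<le> nseps T" "set (flat u) \<subseteq> set T"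
    by (auto simp: peels_to_def)
qed

lemma peel_segment_start:
  assumes cs: "\<forall>c\<in>set cs. c \<noteq> [] \<and> Sep \<notin> set c" and e: "cs = pre @ (Letter a # c) # post"
    and c: "c \<noteq> []"
  shows "\<exists>T' u. nonempty_segs T' \<and> nseps T' \<le> nseps (join_segs cs) \<and> peels_to (join_segs cs) T' u"
proof -
  let ?T' = "join_segs (pre @ c # post)"
  have "nonempty_segs ?T'" using cs e c by (intro nonempty_segs_join_segs) auto
  moreover have "\<exists>u. nseps ?T' \<le> nseps (join_segs cs) \<and> peels_to (join_segs cs) ?T' u"
  proof (cases "pre = []")
    case True
    then have "join_segs cs = Letter a # ?T'" using e by (simp add: join_segs_Cons_Cons)
    then show ?thesis by (intro exI[of _ "[[a]]"]) (simp add: peels_to_def tup_len_def)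
  next
    case False
    then have "join_segs cs = join_segs pre @ [Sep, Letter a] @ join_segs (c # post)"
      "?T' = join_segs pre @ Sep # join_segs (c # post)"
      using e by (simp_all add: join_segs_append join_segs_Cons_Cons)
    then show ?thesis by (intro exI[of _ "[[],[a]]"]) (auto simp: peels_to_def tup_len_def)
  qed
  ultimately show ?thesis by blast
qed

lemma peel_segment_single:
  assumes cs: "\<forall>c\<in>set cs. c \<noteq> [] \<and> Sep \<notin> set c" and e: "cs = pre @ [Letter a] # post"
    and ne: "pre @ post \<noteq> []"
  shows "\<exists>T' u. nonempty_segs T' \<and> nseps T' \<le> nseps (join_segs cs) \<and> peels_to (join_segs cs) T' u"
proof -
  let ?T' = "join_segs (pre @ post)"
  have "nonempty_segs ?T'" using cs e ne by (intro nonempty_segs_join_segs) auto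
  moreover
  consider "pre = []" "post \<noteq> []" | "pre \<noteq> []" "post = []" | "pre \<noteq> []" "post \<noteq> []"
    using ne by blast
  then have "\<exists>u. nseps ?T' \<le> nseps (join_segs cs) \<and> peels_to (join_segs cs) ?T' u"
  proof cases
    case 1
    then have "join_segs cs = [Letter a, Sep] @ ?T'" using e by (simp add: join_segs_Cons)
    then show ?thesis by (intro exI[of _ "[[a],[]]"]) (simp add: peels_to_def tup_len_def)
  next
    case 2
    then have "join_segs cs = ?T' @ [Sep, Letter a]" using e by (simp add: join_segs_append)
    then show ?thesis by (intro exI[of _ "[[],[a]]"]) (simp add: peels_to_def tup_len_def)
  next
    case 3
    then have "join_segs cs = join_segs pre @ [Sep, Letter a, Sep] @ join_segs post"
      "?T' = join_segs pre @ Sep # join_segs post"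
      using e by (simp_all add: join_segs_append join_segs_Cons)
    then show ?thesis by (intro exI[of _ "[[],[a],[]]"]) (auto simp: peels_to_def tup_len_def)
  qed
  ultimately show ?thesis by blast
qed

lemma peel_segment_end:
  assumes cs: "\<forall>c\<in>set cs. c \<noteq> [] \<and> Sep \<notin> set c" and e: "cs = pre @ (c @ [Letter a]) # post"
    and c: "c \<noteq> []"
  shows "\<exists>T' u. nonempty_segs T' \<and> nseps T' \<le> nseps (join_segs cs) \<and> peels_to (join_segs cs) T' u"
proof -
  let ?T' = "join_segs (pre @ c # post)"
  have "nonempty_segs ?T'" using cs e c by (intro nonempty_segs_join_segs) auto
  moreover have "\<exists>u. nseps ?T' \<le> nseps (join_segs cs) \<and> peels_to (join_segs cs) ?T' u"
  proof (cases "post = []")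
    case True
    then have "join_segs cs = ?T' @ [Letter a]"
      using e join_segs_merge[of pre c "[Letter a]" "[]"] by simp
    then show ?thesis by (intro exI[of _ "[[a]]"]) (simp add: peels_to_def tup_len_def)
  next
    case False
    then have "join_segs cs = join_segs (pre @ [c]) @ [Letter a, Sep] @ join_segs post"
      "?T' = join_segs (pre @ [c]) @ Sep # join_segs post"
      using e join_segs_merge[of pre c "[Letter a]" "[]"] join_segs_append[of "pre @ [c]" post]
        join_segs_append[of "pre @ [c @ [Letter a]]" post]
      by simp_all
    then show ?thesis by (intro exI[of _ "[[a],[]]"]) (auto simp: peels_to_def tup_len_def)
  qed
  ultimately show ?thesis by blast
qed

lemma length_le_sum_list: "\<forall>x\<in>set xs. (1::nat) \<le> f x \<Longrightarrow> length xs \<le> sum_list (map f xs)"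
  by (induction xs) auto

lemma holes_of_ne: "x \<in> set c \<Longrightarrow> x \<noteq> Sep \<Longrightarrow> \<not> is_letter x \<Longrightarrow> holes_of c \<noteq> []"
  by (cases x) (auto simp flip: mem_holes_of)

lemma length_holes_of_join_segs:
  assumes "\<forall>c\<in>set cs. c \<noteq> [] \<and> Sep \<notin> set c \<and> \<not> is_letter (hd c)"
  shows "length cs \<le> length (holes_of (join_segs cs))"
proof -
  have "1 \<le> length (holes_of c)" if "c \<in> set cs" for c
  proof -
    have "c \<noteq> []" "Sep \<notin> set c" "\<not> is_letter (hd c)" using assms that by auto
    then have "holes_of c \<noteq> []" by (intro holes_of_ne[of "hd c"]) (auto dest: hd_in_set)
    then show ?thesis by (cases "holes_of c") auto
  qed
  then show ?thesis
    using length_le_sum_list[of cs "\<lambda>c. length (holes_of c)"]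
    by (simp add: holes_of_join_segs length_concat comp_def)
qed

text \<open>When every segment begins and ends with a hole, a letter can only be removed by splitting
  its segment, which costs a separator; the bound on the number of holes pays for it.\<close>

lemma peel_segment_inner:
  assumes cs: "\<forall>c\<in>set cs. c \<noteq> [] \<and> Sep \<notin> set c \<and> \<not> is_letter (hd c) \<and> \<not> is_letter (last c)"
    and e: "cs = pre @ (p @ Letter a # q) # post"
    and holes: "length (holes_of (join_segs cs)) \<le> Suc k"
  shows "\<exists>T'. nonempty_segs T' \<and> nseps T' \<le> k \<and> peels_to (join_segs cs) T' [[a]]"
proof -
  have seg: "p @ Letter a # q \<in> set cs" using e by simp
  then have hd_last: "\<not> is_letter (hd (p @ Letter a # q))" "\<not> is_letter (last (p @ Letter a # q))"
    and Sep_pq: "Sep \<notin> set p" "Sep \<notin> set q"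
    using cs by auto
  have pq: "p \<noteq> []" "q \<noteq> []" using hd_last by auto
  let ?T' = "join_segs (pre @ p # q # post)"
  have "nonempty_segs ?T'" using cs e pq Sep_pq by (intro nonempty_segs_join_segs) auto
  moreover have "peels_to (join_segs cs) ?T' [[a]]"
  proof -
    have "join_segs cs = join_segs (pre @ [p]) @ [Letter a] @ join_segs (q # post)"
      using e join_segs_merge[of pre p "Letter a # q" post] by (simp add: join_segs_Cons_Cons)
    moreover have "?T' = join_segs (pre @ [p]) @ Sep # join_segs (q # post)"
      using join_segs_append[of "pre @ [p]" "q # post"] by simp
    ultimately show ?thesis by (auto simp: peels_to_def tup_len_def)
  qed
  moreover have "nseps ?T' \<le> k"
  proof -
    have "holes_of p \<noteq> []"
      using hd_last pq Sep_pq by (intro holes_of_ne[of "hd p"]) (auto dest: hd_in_set)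
    moreover have "holes_of q \<noteq> []"
      using hd_last pq Sep_pq by (intro holes_of_ne[of "last q"]) (auto dest: last_in_set)
    ultimately have "1 \<le> length (holes_of p)" "1 \<le> length (holes_of q)" by (simp_all add: Suc_le_eq)
    moreover have "length pre \<le> length (holes_of (join_segs pre))"
      "length post \<le> length (holes_of (join_segs post))"
      using cs e by (auto intro!: length_holes_of_join_segs)
    ultimately have "length pre + length post + 2 \<le> length (holes_of (join_segs cs))"
      by (simp add: e holes_of_join_segs length_concat comp_def)
    moreover have "nseps ?T' = Suc (length pre + length post)"
      using cs e pq Sep_pq by (subst nseps_join_segs) auto
    ultimately show ?thesis using holes by simp
  qed
  ultimately show ?thesis by blast
qed

lemma segment_letter_cases[consumes 1, case_names single starts ends inner]:
  assumes cs: "\<forall>c\<in>set cs. c \<noteq> []"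
  obtains (single) pre a post where "cs = pre @ [Letter a] # post"
    | (starts) pre a c post where "cs = pre @ (Letter a # c) # post" "c \<noteq> []"
    | (ends) pre c a post where "cs = pre @ (c @ [Letter a]) # post" "c \<noteq> []"
    | (inner) "\<forall>c\<in>set cs. \<not> is_letter (hd c) \<and> \<not> is_letter (last c)"
proof (cases "\<exists>c\<in>set cs. is_letter (hd c)")
  case True
  then obtain c pre post where "cs = pre @ c # post" "is_letter (hd c)" by (metis split_list)
  moreover from this obtain a c' where "c = Letter a # c'"
    using cs by (cases c; cases "hd c") auto
  ultimately show thesis using single starts by (cases c') blast+
next
  case no_start: False
  show thesis
  proof (cases "\<exists>c\<in>set cs. is_letter (last c)")
    case True
    then obtain c pre post where c: "cs = pre @ c # post" "is_letter (last c)" by (metis split_list)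
    then obtain a c' where "c = c' @ [Letter a]"
      using cs by (cases c rule: rev_cases; cases "last c") auto
    moreover have "c' \<noteq> []" using no_start c calculation by auto
    ultimately show thesis using ends c by blast
  next
    case False
    then show thesis using inner no_start by blast
  qed
qed

lemma peel_letter:
  assumes segs_T: "nonempty_segs T" and seps: "nseps T \<le> k" and holes: "length (holes_of T) \<le> Suc k"
    and letter: "Letter a \<in> set T" and not_single: "\<forall>a. T \<noteq> [Letter a]"
  shows "\<exists>T' u. nonempty_segs T' \<and> nseps T' \<le> k \<and> peels_to T T' u"
proof -
  define cs where "cs = segs T"
  have T: "T = join_segs cs" by (simp add: cs_def)
  have cs: "\<forall>c\<in>set cs. c \<noteq> [] \<and> Sep \<notin> set c"
    using segs_T Sep_notin_segs unfolding nonempty_segs_def cs_def by blast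
  then have "\<forall>c\<in>set cs. c \<noteq> []" by blast
  then show ?thesis
  proof (cases rule: segment_letter_cases)
    case (single pre b post)
    then have "pre @ post \<noteq> []" using not_single T by auto
    then show ?thesis using peel_segment_single[OF cs single] seps T by fastforce
  next
    case (starts pre b c post)
    then show ?thesis using peel_segment_start[OF cs starts] seps T by fastforce
  next
    case (ends pre c b post)
    then show ?thesis using peel_segment_end[OF cs ends] seps T by fastforce
  next
    case inner
    obtain c pre post where "cs = pre @ c # post" "Letter a \<in> set c"
      using letter set_join_segs[of "Letter a" cs] T by (metis sym.distinct(1) split_list)
    moreover from this obtain p q where "c = p @ Letter a # q" by (metis split_list)
    ultimately show ?thesis
      using peel_segment_inner[of cs pre p a q post k] inner cs holes T by auto
  qed
qed

lemma peels_to_rhs: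
  assumes p: "peels_to T T' u" and rf: "rf Y = nseps T'" and k: "nseps T \<le> k" "nseps T' \<le> k"
  shows "\<exists>rhs. (rhs = Cat (Tup u) (NT Y) \<or> rhs = Cat (NT Y) (Tup u) \<or>
    (\<exists>j. rhs = Intc j (NT Y) (Tup u))) \<and>
    correct k rf rhs \<and> trank rf rhs = nseps T \<and>
    (\<forall>y z. length y = Suc (nseps T') \<longrightarrow> flat y = fill T' z \<longrightarrow> flat (val_with rhs y) = fill T z)"
proof -
  have u: "u \<noteq> []" "tup_rank u = nseps (flat u)" "tup_rank u \<le> k"
    using p peels_to_counts(5)[OF p] k
      by (auto simp: peels_to_def tup_len_def tup_rank_def nseps_flat)
  have y_ne: "y \<noteq> []" if "length y = Suc n" for y :: "'a tuple" and n using that by auto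
  consider "T = flat u @ T'" | "T = T' @ flat u" | P Q where "T' = P @ Sep # Q" "T = P @ flat u @ Q"
    using p by (auto simp: peels_to_def)
  then show ?thesis
  proof cases
    case 1
    show ?thesis
      by (rule exI[of _ "Cat (Tup u) (NT Y)"]) (use 1 u rf k y_ne in \<open>auto simp: flat_tcat\<close>)
  next
    case 2
    show ?thesis
      by (rule exI[of _ "Cat (NT Y) (Tup u)"]) (use 2 u rf k y_ne in \<open>auto simp: flat_tcat\<close>)
  next
    case 3
    let ?j = "Suc (nseps P)"
    have val: "flat (tintc ?j y u) = fill T z"
      if "length y = Suc (nseps T')" "flat y = fill T' z" for y z
      using that 3 u by (simp add: flat_tintc replace_sep_split)
    show ?thesis
      by (rule exI[of _ "Intc ?j (NT Y) (Tup u)"]) (use 3 u rf k val in auto)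
  qed
qed

section \<open>The normal-form grammar\<close>

definition nt_opt :: "('n, 'a) tm \<Rightarrow> 'n option" where
  "nt_opt \<alpha> = (case nts_of \<alpha> of [] \<Rightarrow> None | B # _ \<Rightarrow> Some B)"

lemma correct_trank_le: "correct k rf \<alpha> \<Longrightarrow> trank rf \<alpha> \<le> k"
  by (induction \<alpha>) (auto simp: tup_rank_def)

text \<open>A state \<open>(Some B, T)\<close> generates the tuples whose flattening is \<open>T\<close> filled with a tuple
  generated by \<open>B\<close> whose components absent from \<open>T\<close> are empty; \<open>(None, T)\<close> generates \<open>T\<close>
  alone.\<close>

context
  fixes k :: nat and Sig :: "'a set" and G :: "('n, 'a) grammar"
  assumes fin: "finite Sig" and dcfg: "is_dcfg k Sig G" and lin: "linear_grammar G"
begin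

definition state_syms :: "'n option \<Rightarrow> 'a sym set" where
  "state_syms ob = insert Sep (Letter ` Sig) \<union> (case ob of None \<Rightarrow> {} | Some B \<Rightarrow> Hole ` {..rk G B})"

definition max_letters :: nat where
  "max_letters = Max (insert 0 ((\<lambda>(A, \<alpha>). nletters (template (rk G) \<alpha>)) ` rules G))"

definition states :: "('n option \<times> 'a sym list) set" where
  "states = Sigma (insert None (Some ` nts G))
     (\<lambda>ob. {T. set T \<subseteq> state_syms ob \<and> length T \<le> max_letters + k + Suc k \<and> nseps T \<le> k})"

definition state_rank :: "'n option \<times> 'a sym list \<Rightarrow> nat" where
  "state_rank X = nseps (snd X)"

fun generated :: "'n option \<Rightarrow> 'a tuple \<Rightarrow> bool" where
  "generated None z \<longleftrightarrow> z = []"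
| "generated (Some B) z \<longleftrightarrow> lgen (rules G) B z"

definition state_lang :: "'n option \<times> 'a sym list \<Rightarrow> 'a sym list set" where
  "state_lang X = {fill (snd X) z | z. generated (fst X) z \<and>
    (\<forall>i<length z. Hole i \<notin> set (snd X) \<longrightarrow> z ! i = [])}"

definition nf_start :: "'n option \<times> 'a sym list" where
  "nf_start = (Some (start G), [Hole 0])"

definition unit_tuples :: "'a tuple set" where
  "unit_tuples = {u. tup_len u = 1 \<and> (\<forall>w\<in>set u. set w \<subseteq> Sig) \<and> length u \<le> Suc k}"

definition nf_shaped :: "'n option \<times> 'a sym list \<Rightarrow> ('n option \<times> 'a sym list, 'a) tm \<Rightarrow> bool" where
  "nf_shaped X rhs \<longleftrightarrow>
     (\<exists>u Y. u \<in> unit_tuples \<and> Y \<in> states \<and>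
       (rhs = Cat (Tup u) (NT Y) \<or> rhs = Cat (NT Y) (Tup u) \<or> (\<exists>j. rhs = Intc j (NT Y) (Tup u)))) \<or>
     (\<exists>u\<in>unit_tuples. rhs = Tup u) \<or> (X = nf_start \<and> rhs = Tup [[]])"

definition sound_rule :: "'n option \<times> 'a sym list \<Rightarrow> ('n option \<times> 'a sym list, 'a) tm \<Rightarrow> bool" where
  "sound_rule X rhs \<longleftrightarrow> (nts_of rhs = [] \<longrightarrow> flat (val rhs) \<in> state_lang X) \<and>
     (\<forall>Y. nts_of rhs = [Y] \<longrightarrow>
        (\<forall>y. length y = Suc (state_rank Y) \<longrightarrow> flat y \<in> state_lang Y \<longrightarrow>
             flat (val_with rhs y) \<in> state_lang X))"

definition nf_rules :: "(('n option \<times> 'a sym list) \<times> ('n option \<times> 'a sym list, 'a) tm) set" where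
  "nf_rules = {(X, rhs). X \<in> states \<and> correct k state_rank rhs \<and>
     state_rank X = trank state_rank rhs \<and> nf_shaped X rhs \<and> sound_rule X rhs}"

definition nf_grammar :: "('n option \<times> 'a sym list, 'a) grammar" where
  "nf_grammar = \<lparr>nts = states, rk = state_rank, rules = nf_rules, start = nf_start\<rparr>"

lemma rule_wf:
  assumes "(A, \<alpha>) \<in> rules G"
  shows "A \<in> nts G" "correct k (rk G) \<alpha>" "rk G A = trank (rk G) \<alpha>" "set (nts_of \<alpha>) \<subseteq> nts G"
    "length (nts_of \<alpha>) \<le> 1" "\<forall>u \<in> set (leaves \<alpha>). \<forall>w \<in> set u. set w \<subseteq> Sig"
  using assms dcfg lin unfolding is_dcfg_def linear_grammar_def by fast+

lemma template_Sig: "(A, \<alpha>) \<in> rules G \<Longrightarrow> Letter a \<in> set (template (rk G) \<alpha>) \<Longrightarrow> a \<in> Sig"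
  using template_letters[of a "rk G" \<alpha>] rule_wf(6)[of A \<alpha>] by blast

lemma rule_value:
  assumes r: "(A, \<alpha>) \<in> rules G"
    and z': "nt_opt \<alpha> = None \<and> z' = [] \<or> (\<exists>B. nt_opt \<alpha> = Some B \<and> length z' = Suc (rk G B))"
  shows "length (val_with \<alpha> z') = Suc (rk G A)"
    "flat (val_with \<alpha> z') = fill (template (rk G) \<alpha>) z'"
    "holes_of (template (rk G) \<alpha>) = [0..<length z']"
proof -
  have "nts_of \<alpha> = [] \<and> z' = [] \<or> (\<exists>B. nts_of \<alpha> = [B] \<and> length z' = Suc (rk G B))"
    using z' rule_wf(5)[OF r] by (auto simp: nt_opt_def split: list.splits)
  then show "length (val_with \<alpha> z') = Suc (rk G A)"
    "flat (val_with \<alpha> z') = fill (template (rk G) \<alpha>) z'"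
    "holes_of (template (rk G) \<alpha>) = [0..<length z']"
    using val_with_template[of k "rk G" \<alpha> z'] holes_of_template[of k "rk G" \<alpha>] rule_wf[OF r]
    by (auto simp del: upt_Suc)
qed

lemma rule_value_Sig:
  assumes r: "(A, \<alpha>) \<in> rules G" and z': "\<forall>w\<in>set z'. set w \<subseteq> Sig"
    and "nt_opt \<alpha> = None \<and> z' = [] \<or> (\<exists>B. nt_opt \<alpha> = Some B \<and> length z' = Suc (rk G B))"
  shows "\<forall>w\<in>set (val_with \<alpha> z'). set w \<subseteq> Sig"
proof (intro ballI subsetI)
  fix w a assume "w \<in> set (val_with \<alpha> z')" "a \<in> set w"
  then have "Letter a \<in> set (fill (template (rk G) \<alpha>) z')"
    using rule_value[OF r assms(3)] Letter_in_flat by metis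
  then have "Letter a \<in> set (template (rk G) \<alpha>) \<or> (\<exists>w\<in>set z'. a \<in> set w)"
    using rule_value(3)[OF r assms(3)] by (intro Letter_in_fill) auto
  then show "a \<in> Sig" using template_Sig[OF r] z' by blast
qed

lemma lgen_induct_nt_opt[consumes 1, case_names rule]:
  assumes "lgen (rules G) A y"
    and "\<And>A \<alpha> z'. (A, \<alpha>) \<in> rules G \<Longrightarrow> generated (nt_opt \<alpha>) z' \<Longrightarrow>
           (\<And>B. nt_opt \<alpha> = Some B \<Longrightarrow> Q B z') \<Longrightarrow> Q A (val_with \<alpha> z')"
  shows "Q A y"
  using assms(1)
proof (induction rule: lgen.induct)
  case (lgen_ground A \<alpha>)
  then show ?case using assms(2)[of A \<alpha> "[]"] by (simp add: nt_opt_def val_with_ground)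
next
  case (lgen_step A \<alpha> B z)
  then show ?case using assms(2)[of A \<alpha> z] by (simp add: nt_opt_def)
qed

lemma lgen_props:
  "lgen (rules G) B z \<Longrightarrow> length z = Suc (rk G B) \<and> (\<forall>w\<in>set z. set w \<subseteq> Sig) \<and> B \<in> nts G \<and> rk G B \<le> k"
proof (induction rule: lgen_induct_nt_opt)
  case (rule A \<alpha> z')
  then have z': "nt_opt \<alpha> = None \<and> z' = [] \<or> (\<exists>B. nt_opt \<alpha> = Some B \<and> length z' = Suc (rk G B))"
    and "\<forall>w\<in>set z'. set w \<subseteq> Sig"
    by (cases "nt_opt \<alpha>"; auto)+
  then show ?case
    using rule_value(1)[OF rule(1) z'] rule_value_Sig[OF rule(1)] rule_wf[OF rule(1)]
      correct_trank_le[of k "rk G" \<alpha>] by auto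
qed

lemma generated_props:
  assumes "generated ob z"
  shows "length z \<le> Suc k" "\<forall>w\<in>set z. set w \<subseteq> Sig"
    "ob = None \<and> z = [] \<or> (\<exists>B. ob = Some B \<and> B \<in> nts G \<and> length z = Suc (rk G B))"
  using assms lgen_props by (cases ob; force)+

lemma generated_nt_opt:
  "generated (nt_opt \<alpha>) z \<Longrightarrow>
   nt_opt \<alpha> = None \<and> z = [] \<or> (\<exists>B. nt_opt \<alpha> = Some B \<and> length z = Suc (rk G B))"
  using generated_props(3) by blast

lemma max_letters_ge: "(A, \<alpha>) \<in> rules G \<Longrightarrow> nletters (template (rk G) \<alpha>) \<le> max_letters"
proof -
  have "finite (rules G)" using dcfg unfolding is_dcfg_def by blast
  then show "(A, \<alpha>) \<in> rules G \<Longrightarrow> ?thesis" unfolding max_letters_def by (intro Max_ge) auto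
qed

lemma states_Letter: "(ob, T) \<in> states \<Longrightarrow> Letter a \<in> set T \<Longrightarrow> a \<in> Sig"
proof -
  assume "(ob, T) \<in> states" "Letter a \<in> set T"
  then have "Letter a \<in> state_syms ob" by (auto simp: states_def)
  then show "a \<in> Sig" by (cases ob) (auto simp: state_syms_def)
qed

lemma fill_in_state_lang:
  assumes "generated ob z" and holes: "holes_of T = filter (\<lambda>i. z ! i \<noteq> []) [0..<length z]"
  shows "fill T z \<in> state_lang (ob, T)"
proof -
  have "z ! i = []" if "i < length z" "Hole i \<notin> set T" for i
    using that holes mem_holes_of[of i T] by auto
  then show ?thesis using assms(1) unfolding state_lang_def by auto
qed

lemma nf_rules_sound: "lgen nf_rules X y \<Longrightarrow> length y = Suc (state_rank X) \<and> flat y \<in> state_lang X"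
proof (induction rule: lgen.induct)
  case (lgen_ground A \<alpha>)
  have r: "correct k state_rank \<alpha>" "state_rank A = trank state_rank \<alpha>" "sound_rule A \<alpha>"
    using lgen_ground(1) by (simp_all add: nf_rules_def)
  then have "flat (val \<alpha>) \<in> state_lang A" using lgen_ground(2) by (simp add: sound_rule_def)
  moreover have "length (val \<alpha>) = Suc (trank state_rank \<alpha>)"
    using val_with_template[OF r(1), of "[]"] val_with_ground[OF lgen_ground(2)] lgen_ground(2)
      by simp
  ultimately show ?case using r(2) by simp
next
  case (lgen_step A \<alpha> B z)
  have r: "correct k state_rank \<alpha>" "state_rank A = trank state_rank \<alpha>" "sound_rule A \<alpha>"
    using lgen_step(1) by (simp_all add: nf_rules_def)
  then have "flat (val_with \<alpha> z) \<in> state_lang A"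
    using lgen_step(2) lgen_step.IH unfolding sound_rule_def by blast
  moreover have "length (val_with \<alpha> z) = Suc (trank state_rank \<alpha>)"
    using val_with_template[OF r(1), of z] lgen_step(2) lgen_step.IH by simp
  ultimately show ?case using r(2) by simp
qed

lemma nf_rule_transfer:
  assumes "(Y, \<alpha>) \<in> nf_rules" "\<alpha> \<noteq> Tup [[]]" "state_lang Y \<subseteq> state_lang X" "X \<in> states"
    "state_rank X = state_rank Y"
  shows "(X, \<alpha>) \<in> nf_rules"
proof -
  have "nf_shaped Y \<alpha>" "sound_rule Y \<alpha>" "correct k state_rank \<alpha>" "state_rank Y = trank state_rank \<alpha>"
    using assms(1) by (simp_all add: nf_rules_def)
  then have "nf_shaped X \<alpha>" "sound_rule X \<alpha>"
    using assms(2,3) unfolding nf_shaped_def sound_rule_def by blast+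
  then show ?thesis using assms(4,5) \<open>correct k state_rank \<alpha>\<close> \<open>state_rank Y = trank state_rank \<alpha>\<close>
    by (simp add: nf_rules_def)
qed

lemma lgen_transfer:
  assumes "lgen nf_rules Y t" "1 \<le> nletters (flat t)" "state_lang Y \<subseteq> state_lang X" "X \<in> states"
    "state_rank X = state_rank Y"
  shows "lgen nf_rules X t"
  using assms(1)
proof cases
  case (lgen_ground \<alpha>)
  then have "\<alpha> \<noteq> Tup [[]]" using assms(2) by (auto simp: flat_def)
  with lgen_ground have "(X, \<alpha>) \<in> nf_rules" using nf_rule_transfer assms(3-5) by blast
  with lgen_ground show ?thesis using lgen.lgen_ground by metis
next
  case (lgen_step \<alpha> B z)
  then have "\<alpha> \<noteq> Tup [[]]" by auto
  with lgen_step have "(X, \<alpha>) \<in> nf_rules" using nf_rule_transfer assms(3-5) by blast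
  with lgen_step show ?thesis using lgen.lgen_step by metis
qed

lemma sound_rule_transfer:
  assumes "nts_of rhs = [(ob, T')]" "holes_of T' = holes_of T"
    and "\<And>y z. length y = Suc (nseps T') \<Longrightarrow> flat y = fill T' z \<Longrightarrow> flat (val_with rhs y) = fill T z"
  shows "sound_rule (ob, T) rhs"
  unfolding sound_rule_def
proof (intro conjI allI impI)
  fix Y y assume "nts_of rhs = [Y]" "length y = Suc (state_rank Y)" "flat y \<in> state_lang Y"
  then obtain z where z: "flat y = fill T' z" "generated ob z"
    "\<forall>i<length z. Hole i \<notin> set T' \<longrightarrow> z ! i = []"
    and "length y = Suc (nseps T')"
    using assms(1) by (auto simp: state_lang_def state_rank_def)
  moreover have "Hole i \<in> set T' \<longleftrightarrow> Hole i \<in> set T" for i using assms(2) mem_holes_of by metis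
  ultimately show "flat (val_with rhs y) \<in> state_lang (ob, T)"
    unfolding state_lang_def using assms(3) by auto
qed (use assms(1) in simp)

lemma peel_rule:
  assumes X: "(ob, T) \<in> states" and Y: "(ob, T') \<in> states" and p: "peels_to T T' u"
  obtains rhs where "((ob, T), rhs) \<in> nf_rules" "nts_of rhs = [(ob, T')]"
    "\<And>y z. length y = Suc (nseps T') \<Longrightarrow> flat y = fill T' z \<Longrightarrow> flat (val_with rhs y) = fill T z"
proof -
  have k: "nseps T \<le> k" "nseps T' \<le> k" using X Y by (auto simp: states_def)
  have r: "state_rank (ob, T') = nseps T'" by (simp add: state_rank_def)
  obtain rhs where shape: "rhs = Cat (Tup u) (NT (ob, T')) \<or> rhs = Cat (NT (ob, T')) (Tup u) \<or>
      (\<exists>j. rhs = Intc j (NT (ob, T')) (Tup u))"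
    and rhs: "correct k state_rank rhs" "trank state_rank rhs = nseps T"
    and val: "\<And>y z. length y = Suc (nseps T') \<Longrightarrow> flat y = fill T' z \<Longrightarrow>
      flat (val_with rhs y) = fill T z"
    using peels_to_rhs[where rf = state_rank and Y = "(ob, T')", OF p r k] by blast
  have nts: "nts_of rhs = [(ob, T')]" using shape by auto
  have "u \<in> unit_tuples"
  proof -
    have tl: "tup_len u = 1" using p by (simp add: peels_to_def)
    then have "u \<noteq> []" by (auto simp: tup_len_def)
    then have "length u = Suc (nseps (flat u))" by (simp add: nseps_flat)
    then have "length u \<le> Suc k" using peels_to_counts(5)[OF p] k by simp
    moreover have "a \<in> Sig" if "w \<in> set u" "a \<in> set w" for w a
    proof -
      have "Letter a \<in> set (flat u)" using that by (auto simp: Letter_in_flat)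
      then show ?thesis using peels_to_counts(6)[OF p] states_Letter[OF X] by blast
    qed
    ultimately show ?thesis using tl by (auto simp: unit_tuples_def)
  qed
  then have "nf_shaped (ob, T) rhs" using shape Y unfolding nf_shaped_def by auto
  moreover have "sound_rule (ob, T) rhs"
    using sound_rule_transfer[OF nts peels_to_counts(1)[OF p] val] .
  ultimately have "((ob, T), rhs) \<in> nf_rules" using X rhs by (simp add: nf_rules_def state_rank_def)
  then show thesis using that nts val by blast
qed

lemma terminal_rule:
  assumes X: "(ob, T) \<in> states" and s: "fill T z \<in> state_lang (ob, T)"
    and one: "nletters (fill T z) = 1" and holes: "\<forall>i\<in>set (holes_of T). i < length z"
    and z: "\<forall>w\<in>set z. set w \<subseteq> Sig"
  shows "lgen nf_rules (ob, T) (unflat (fill T z))"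
proof -
  let ?t = "unflat (fill T z)"
  have t: "flat ?t = fill T z" "length ?t = Suc (nseps T)"
    by (simp_all add: flat_unflat holes_of_fill length_unflat)
  have "tup_len ?t = 1" using one nletters_flat[of ?t] t(1) by simp
  moreover have "a \<in> Sig" if "w \<in> set ?t" "a \<in> set w" for w a
  proof -
    have "Letter a \<in> set (fill T z)" using that t(1) Letter_in_flat by metis
    then show ?thesis using Letter_in_fill[OF _ holes] states_Letter[OF X] z by blast
  qed
  moreover have "nseps T \<le> k" using X by (simp add: states_def)
  ultimately have "?t \<in> unit_tuples" using t(2) by (auto simp: unit_tuples_def)
  then have "nf_shaped (ob, T) (Tup ?t)" unfolding nf_shaped_def by blast
  moreover have "sound_rule (ob, T) (Tup ?t)" using s t(1) by (simp add: sound_rule_def)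
  moreover have "correct k state_rank (Tup ?t)" "state_rank (ob, T) = trank state_rank (Tup ?t)"
    using t(2) \<open>nseps T \<le> k\<close> by (auto simp: tup_rank_def state_rank_def)
  ultimately have "((ob, T), Tup ?t) \<in> nf_rules" using X by (simp add: nf_rules_def)
  then show ?thesis using lgen_ground[of "(ob, T)" "Tup ?t" nf_rules] by simp
qed

definition shaped :: "'n option \<Rightarrow> 'a sym list \<Rightarrow> 'a tuple \<Rightarrow> bool" where
  "shaped ob T z \<longleftrightarrow>
     (ob, T) \<in> states \<and> nonempty_segs T \<and> holes_of T = filter (\<lambda>i. z ! i \<noteq> []) [0..<length z]"

definition nf_complete :: "'n option \<Rightarrow> 'a tuple \<Rightarrow> bool" where
  "nf_complete ob z \<longleftrightarrow> (\<forall>T. shaped ob T z \<longrightarrow> nletters T = 0 \<longrightarrow> 1 \<le> nletters (fill T z) \<longrightarrow>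
     (\<exists>t. lgen nf_rules (ob, T) t \<and> flat t = fill T z))"

lemma nf_complete_None: "nf_complete None []"
  by (auto simp: nf_complete_def shaped_def fill_no_holes)

lemma peel_step:
  assumes sh: "shaped ob T z" and two: "2 \<le> nletters (fill T z)" and T: "nletters T \<noteq> 0"
    and z: "length z \<le> Suc k"
  obtains T' where "shaped ob T' z" "nletters T' < nletters T" "1 \<le> nletters (fill T' z)"
    "\<And>t'. lgen nf_rules (ob, T') t' \<Longrightarrow> flat t' = fill T' z \<Longrightarrow>
       \<exists>t. lgen nf_rules (ob, T) t \<and> flat t = fill T z"
proof -
  have X: "(ob, T) \<in> states" and holes: "holes_of T = filter (\<lambda>i. z ! i \<noteq> []) [0..<length z]"
    using sh by (auto simp: shaped_def)
  obtain a where "Letter a \<in> set T" using T by (auto simp: nletters_eq_0_iff)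
  moreover have "T \<noteq> [Letter b]" for b using two by auto
  moreover have "length (holes_of T) \<le> Suc k"
    using holes z length_filter_le[of "\<lambda>i. z ! i \<noteq> []" "[0..<length z]"] by simp
  ultimately obtain T' u where T': "nonempty_segs T'" "nseps T' \<le> k" "peels_to T T' u"
    using peel_letter[of T k a] sh X by (auto simp: shaped_def states_def)
  note counts = peels_to_counts[OF T'(3)]
  have Y: "(ob, T') \<in> states" using X counts T'(2) by (auto simp: states_def state_syms_def)
  have "shaped ob T' z" using Y T'(1) counts(1) holes by (simp add: shaped_def)
  moreover have "nletters (fill T z) = Suc (nletters (fill T' z))"
    using counts by (simp add: nletters_fill)
  moreover obtain rhs where "((ob, T), rhs) \<in> nf_rules" "nts_of rhs = [(ob, T')]"
    "\<And>y z'. length y = Suc (nseps T') \<Longrightarrow> flat y = fill T' z' \<Longrightarrow> flat (val_with rhs y) = fill T z'"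
    using peel_rule[OF X Y T'(3)] by blast
  then have "\<exists>t. lgen nf_rules (ob, T) t \<and> flat t = fill T z"
    if "lgen nf_rules (ob, T') t'" "flat t' = fill T' z" for t'
    using that nf_rules_sound[OF that(1)] lgen_step by (metis state_rank_def snd_conv)
  ultimately show thesis using that two counts(4) by simp
qed

lemma peel_letters:
  assumes gen: "generated ob z" and IH: "nf_complete ob z"
  shows "shaped ob T z \<Longrightarrow> 1 \<le> nletters (fill T z) \<Longrightarrow> \<exists>t. lgen nf_rules (ob, T) t \<and> flat t = fill T z"
proof (induction "nletters T" arbitrary: T rule: less_induct)
  case less
  note z = generated_props[OF gen]
  consider "nletters T = 0" | "nletters (fill T z) = 1" | "nletters T \<noteq> 0" "2 \<le> nletters (fill T z)"
    using less.prems(2) by linarith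
  then show ?case
  proof cases
    case 1
    then show ?thesis using IH less.prems by (auto simp: nf_complete_def)
  next
    case 2
    have "(ob, T) \<in> states" "holes_of T = filter (\<lambda>i. z ! i \<noteq> []) [0..<length z]"
      using less.prems(1) by (auto simp: shaped_def)
    then show ?thesis
      using terminal_rule 2 z(2) fill_in_state_lang[OF gen] flat_unflat holes_of_fill by fastforce
  next
    case 3
    then obtain T' where "shaped ob T' z" "nletters T' < nletters T" "1 \<le> nletters (fill T' z)"
      "\<And>t'. lgen nf_rules (ob, T') t' \<Longrightarrow> flat t' = fill T' z \<Longrightarrow>
         \<exists>t. lgen nf_rules (ob, T) t \<and> flat t = fill T z"
      using peel_step less.prems(1) z(1) by blast
    then show ?thesis using less.hyps by blast
  qed
qed

lemma rule_lgen: "(A, \<alpha>) \<in> rules G \<Longrightarrow> generated (nt_opt \<alpha>) z' \<Longrightarrow> lgen (rules G) A (val_with \<alpha> z')"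
  using rule_wf(5)[of A \<alpha>]
  by (cases "nts_of \<alpha>") (auto simp: nt_opt_def val_with_ground intro: lgen.intros)

lemma rule_descent:
  assumes r: "(A, \<alpha>) \<in> rules G" and gen: "generated (nt_opt \<alpha>) z'"
    and holes: "holes_of T = filter (\<lambda>i. val_with \<alpha> z' ! i \<noteq> []) [0..<length (val_with \<alpha> z')]"
  shows "descent (template (rk G) \<alpha>) T (val_with \<alpha> z') z'"
proof
  note v = rule_value[OF r generated_nt_opt[OF gen]]
  show "flat (val_with \<alpha> z') = fill (template (rk G) \<alpha>) z'"
    "holes_of (template (rk G) \<alpha>) = [0..<length z']"
    using v(2,3) .
  show "val_with \<alpha> z' \<noteq> []" using v(1) by auto
qed (fact holes)

lemma descend_state:
  assumes r: "(A, \<alpha>) \<in> rules G" and gen: "generated (nt_opt \<alpha>) z'"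
    and sh: "shaped (Some A) T (val_with \<alpha> z')" and T0: "nletters T = 0"
  shows "shaped (nt_opt \<alpha>) (descend (template (rk G) \<alpha>) T z') z'"
proof -
  let ?C = "template (rk G) \<alpha>" let ?W = "descend ?C T z'"
  interpret descent ?C T "val_with \<alpha> z'" z'
    using sh by (intro rule_descent[OF r gen]) (simp add: shaped_def)
  have T: "nseps T \<le> k" "nonempty_segs T" using sh by (auto simp: shaped_def states_def)
  note z' = generated_props[OF gen]
  have "set ?W \<subseteq> state_syms (nt_opt \<alpha>)"
  proof
    fix x assume "x \<in> set ?W"
    then have x: "x \<in> insert Sep (set ?C)" using set_descend T0 by blast
    show "x \<in> state_syms (nt_opt \<alpha>)"
    proof (cases x)
      case (Hole i)
      then have "i < length z'" using x Hole_in_C by auto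
      then show ?thesis using Hole z'(3) by (auto simp: state_syms_def image_iff)
    qed (use x template_Sig[OF r] in \<open>auto simp: state_syms_def\<close>)
  qed
  moreover have "length ?W \<le> max_letters + k + Suc k"
  proof -
    have "length (holes_of ?W) \<le> Suc k"
      using holes_of_descend length_filter_le[of _ "[0..<length z']"] z'(1)
        by (metis le_trans length_upt minus_nat.diff_0)
    then show ?thesis
      using length_eq_counts[of ?W] nletters_descend[OF T0] max_letters_ge[OF r] nseps_descend T(1)
      by linarith
  qed
  moreover have "nt_opt \<alpha> \<in> insert None (Some ` nts G)" using z'(3) by auto
  ultimately show ?thesis
    using nseps_descend T nonempty_segs_descend holes_of_descend
      by (simp add: shaped_def states_def)
qed

lemma state_lang_descend:
  assumes r: "(A, \<alpha>) \<in> rules G" and gen: "generated (nt_opt \<alpha>) z'"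
    and holes: "holes_of T = filter (\<lambda>i. val_with \<alpha> z' ! i \<noteq> []) [0..<length (val_with \<alpha> z')]"
  shows "state_lang (nt_opt \<alpha>, descend (template (rk G) \<alpha>) T z') \<subseteq> state_lang (Some A, T)"
proof
  let ?C = "template (rk G) \<alpha>" let ?W = "descend ?C T z'"
  interpret descent ?C T "val_with \<alpha> z'" z' using rule_descent[OF r gen holes] .
  fix x assume "x \<in> state_lang (nt_opt \<alpha>, ?W)"
  then obtain z'' where x: "x = fill ?W z''" and gen'': "generated (nt_opt \<alpha>) z''"
    and zero: "\<forall>i<length z''. Hole i \<notin> set ?W \<longrightarrow> z'' ! i = []"
    by (auto simp: state_lang_def)
  have l: "length z'' = length z'"
    using generated_props(3)[OF gen] generated_props(3)[OF gen''] by auto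
  note v = rule_value[OF r generated_nt_opt[OF gen'']]
  have "fill ?W z'' = fill T (val_with \<alpha> z'') \<and>
      (\<forall>j<length (val_with \<alpha> z''). Hole j \<notin> set T \<longrightarrow> val_with \<alpha> z'' ! j = [])"
    using v(1) by (intro fill_descend_transfer[OF l zero v(2)]) auto
  then show "x \<in> state_lang (Some A, T)"
    using x rule_lgen[OF r gen''] unfolding state_lang_def by fastforce
qed

lemma descend_rule:
  assumes r: "(A, \<alpha>) \<in> rules G" and gen: "generated (nt_opt \<alpha>) z'"
    and IH: "nf_complete (nt_opt \<alpha>) z'"
  shows "nf_complete (Some A) (val_with \<alpha> z')"
  unfolding nf_complete_def
proof (intro allI impI)
  fix T assume sh: "shaped (Some A) T (val_with \<alpha> z')" and T0: "nletters T = 0"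
    and one: "1 \<le> nletters (fill T (val_with \<alpha> z'))"
  let ?W = "descend (template (rk G) \<alpha>) T z'"
  have holes: "holes_of T = filter (\<lambda>i. val_with \<alpha> z' ! i \<noteq> []) [0..<length (val_with \<alpha> z')]"
    using sh by (simp add: shaped_def)
  interpret descent "template (rk G) \<alpha>" T "val_with \<alpha> z'" z' using rule_descent[OF r gen holes] .
  have shW: "shaped (nt_opt \<alpha>) ?W z'" using descend_state[OF r gen sh T0] .
  moreover have "1 \<le> nletters (fill ?W z')" using one fill_descend by simp
  ultimately obtain t where t: "lgen nf_rules (nt_opt \<alpha>, ?W) t" "flat t = fill T (val_with \<alpha> z')"
    using peel_letters[OF gen IH] fill_descend by metis
  have "lgen nf_rules (Some A, T) t"
  proof (rule lgen_transfer[OF t(1)])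
    show "1 \<le> nletters (flat t)" using t(2) one by simp
    show "state_lang (nt_opt \<alpha>, ?W) \<subseteq> state_lang (Some A, T)"
      using state_lang_descend[OF r gen holes] .
    show "(Some A, T) \<in> states" "state_rank (Some A, T) = state_rank (nt_opt \<alpha>, ?W)"
      using sh nseps_descend by (simp_all add: shaped_def state_rank_def)
  qed
  then show "\<exists>t. lgen nf_rules (Some A, T) t \<and> flat t = fill T (val_with \<alpha> z')" using t(2) by blast
qed

lemma lgen_nf_complete: "lgen (rules G) B z \<Longrightarrow> nf_complete (Some B) z"
proof (induction rule: lgen_induct_nt_opt)
  case (rule A \<alpha> z')
  have "nf_complete (nt_opt \<alpha>) z'"
    using rule(2,3) nf_complete_None by (cases "nt_opt \<alpha>") auto
  then show ?case using descend_rule[OF rule(1,2)] by blast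
qed

lemma finite_states: "finite states"
proof -
  have "finite (state_syms ob)" for ob using fin by (cases ob) (auto simp: state_syms_def)
  then have "finite {T. set T \<subseteq> state_syms ob \<and> length T \<le> n \<and> nseps T \<le> k}" for ob n
    by (rule finite_subset[OF _ finite_lists_length_le, rotated]) auto
  moreover have "finite (insert None (Some ` nts G))" using dcfg by (simp add: is_dcfg_def)
  ultimately show ?thesis unfolding states_def by (intro finite_SigmaI) auto
qed

lemma finite_unit_tuples: "finite unit_tuples"
proof -
  have "unit_tuples \<subseteq> {u. set u \<subseteq> {w. set w \<subseteq> Sig \<and> length w \<le> 1} \<and> length u \<le> Suc k}"
    using member_le_sum_list[of _ "map length _"] by (fastforce simp: unit_tuples_def tup_len_def)
  moreover have "finite {w. set w \<subseteq> Sig \<and> length w \<le> 1}" by (rule finite_lists_length_le[OF fin])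
  ultimately show ?thesis using finite_lists_length_le finite_subset by blast
qed

lemma finite_nf_rules: "finite nf_rules"
proof -
  define rhss where "rhss = Tup ` insert [[]] unit_tuples \<union>
    (\<Union>Y\<in>states. \<Union>u\<in>unit_tuples.
      {Cat (Tup u) (NT Y), Cat (NT Y) (Tup u)} \<union> (\<lambda>j. Intc j (NT Y) (Tup u)) ` {..k})"
  have "finite rhss" unfolding rhss_def using finite_states finite_unit_tuples by blast
  moreover have "rhs \<in> rhss" if "(X, rhs) \<in> nf_rules" for X rhs
  proof -
    have "nf_shaped X rhs" "correct k state_rank rhs" using that by (simp_all add: nf_rules_def)
    then show ?thesis unfolding nf_shaped_def rhss_def by (elim disjE exE conjE bexE) force+
  qed
  then have "nf_rules \<subseteq> states \<times> rhss" by (auto simp: nf_rules_def)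
  ultimately show ?thesis using finite_states by (meson finite_SigmaI finite_subset)
qed

lemma nf_start_states: "nf_start \<in> states"
  using dcfg by (auto simp: nf_start_def states_def state_syms_def is_dcfg_def)

lemma nf_shaped_rhs:
  "nf_shaped X rhs \<Longrightarrow> set (nts_of rhs) \<subseteq> states \<and> length (nts_of rhs) \<le> 1 \<and>
     (\<forall>u \<in> set (leaves rhs). tup_len u \<le> 1 \<and> (\<forall>w \<in> set u. set w \<subseteq> Sig))"
  by (auto simp: nf_shaped_def unit_tuples_def tup_len_def)

lemma nf_grammar_dcfg: "is_dcfg k Sig nf_grammar"
proof -
  have "X \<in> states \<and> correct k state_rank rhs \<and> state_rank X = trank state_rank rhs \<and>
      set (nts_of rhs) \<subseteq> states \<and>
      (\<forall>u \<in> set (leaves rhs). tup_len u \<le> 1 \<and> (\<forall>w \<in> set u. set w \<subseteq> Sig))"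
    if "(X, rhs) \<in> nf_rules" for X rhs
    using that nf_shaped_rhs[of X rhs] by (simp add: nf_rules_def)
  then have "\<forall>(X, rhs) \<in> nf_rules. X \<in> states \<and> correct k state_rank rhs \<and>
      state_rank X = trank state_rank rhs \<and> set (nts_of rhs) \<subseteq> states \<and>
      (\<forall>u \<in> set (leaves rhs). tup_len u \<le> 1 \<and> (\<forall>w \<in> set u. set w \<subseteq> Sig))"
    by fast
  moreover have "state_rank nf_start = 0" by (simp add: state_rank_def nf_start_def)
  ultimately show ?thesis
    using finite_states nf_start_states finite_nf_rules by (simp add: is_dcfg_def nf_grammar_def)
qed

lemma nf_grammar_normal_form: "normal_form nf_grammar"
  unfolding normal_form_def
proof
  fix r assume "r \<in> rules nf_grammar"
  then obtain X rhs where r: "r = (X, rhs)" "X \<in> states" "nf_shaped X rhs"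
    by (auto simp: nf_grammar_def nf_rules_def)
  from r(3) consider u Y where "u \<in> unit_tuples" "Y \<in> states"
      "rhs = Cat (Tup u) (NT Y) \<or> rhs = Cat (NT Y) (Tup u) \<or> (\<exists>j. rhs = Intc j (NT Y) (Tup u))"
    | u where "u \<in> unit_tuples" "rhs = Tup u" | "X = nf_start" "rhs = Tup [[]]"
    unfolding nf_shaped_def by blast
  then show "nf_rule nf_grammar r"
    by cases
      (use r in \<open>auto simp: nf_rule_def unit_tuples_def nf_grammar_def simp del: split_paired_Ex\<close>)
qed

lemma linear_nf_grammar: "linear_grammar nf_grammar"
proof -
  have "length (nts_of rhs) \<le> 1" if "(X, rhs) \<in> nf_rules" for X rhs
    using that nf_shaped_rhs[of X rhs] by (simp add: nf_rules_def)
  then show ?thesis by (auto simp: linear_grammar_def nf_grammar_def)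
qed

lemma fill_Hole_0: "length z = 1 \<Longrightarrow> fill [Hole 0] z = flat z"
  using fill_hole_template[of z 0] by (simp add: hole_template_def)

lemma lang_nf_grammar_subset: "lang nf_grammar \<subseteq> lang G"
proof
  fix t assume "t \<in> lang nf_grammar"
  then have t: "lgen nf_rules nf_start t"
    using lang_nt_eq_lgen[OF linear_nf_grammar] by (simp add: lang_def nf_grammar_def)
  obtain z where z: "flat t = fill [Hole 0] z" "lgen (rules G) (start G) z"
    using nf_rules_sound[OF t] by (auto simp: state_lang_def nf_start_def)
  have lz: "length z = 1" using lgen_props[OF z(2)] dcfg by (simp add: is_dcfg_def)
  moreover have "length t = 1" using nf_rules_sound[OF t] by (simp add: state_rank_def nf_start_def)
  ultimately have "t = z" using z(1) fill_Hole_0[OF lz] by (intro flat_inj) simp_all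
  then show "t \<in> lang G" using z(2) lang_nt_eq_lgen[OF lin] by (simp add: lang_def)
qed

lemma lang_subset_nf_grammar: "lang G \<subseteq> lang nf_grammar"
proof
  fix y assume "y \<in> lang G"
  then have y: "lgen (rules G) (start G) y" using lang_nt_eq_lgen[OF lin] by (simp add: lang_def)
  then have ly: "length y = 1" using lgen_props dcfg by (simp add: is_dcfg_def)
  then obtain w where w: "y = [w]" by (auto simp: length_Suc_conv)
  have "lgen nf_rules nf_start y"
  proof (cases "w = []")
    case True
    have "flat (val (Tup [[]])) \<in> state_lang nf_start"
      using y w True by (auto simp: state_lang_def nf_start_def flat_def intro!: exI[of _ y])
    then have "sound_rule nf_start (Tup [[]])" by (simp add: sound_rule_def)
    moreover have "nf_shaped nf_start (Tup [[]])" by (simp add: nf_shaped_def)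
    ultimately have "(nf_start, Tup [[]]) \<in> nf_rules"
      using nf_start_states by (simp add: nf_rules_def state_rank_def nf_start_def tup_rank_def)
    then show ?thesis using lgen_ground[of nf_start "Tup [[]]" nf_rules] w True by simp
  next
    case False
    have "shaped (Some (start G)) [Hole 0] y"
      using nf_start_states w False by (simp add: shaped_def nonempty_segs_def nf_start_def)
    moreover have "1 \<le> nletters (fill [Hole 0] y)" using w False by (simp add: Suc_le_eq)
    ultimately obtain t where t: "lgen nf_rules nf_start t" "flat t = fill [Hole 0] y"
      using lgen_nf_complete[OF y] by (auto simp: nf_complete_def nf_start_def)
    moreover have "length t = 1"
      using nf_rules_sound[OF t(1)] by (simp add: state_rank_def nf_start_def)
    ultimately have "t = y" using t(2) fill_Hole_0[OF ly] ly by (intro flat_inj) simp_all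
    then show ?thesis using t by simp
  qed
  then show "y \<in> lang nf_grammar"
    using lang_nt_eq_lgen[OF linear_nf_grammar] by (simp add: lang_def nf_grammar_def)
qed

end

section \<open>Renaming nonterminals\<close>

definition rename_grammar :: "('m \<Rightarrow> 'p) \<Rightarrow> ('m, 'a) grammar \<Rightarrow> ('p, 'a) grammar" where
  "rename_grammar f G = \<lparr>nts = f ` nts G, rk = (\<lambda>B. rk G (the_inv_into (nts G) f B)),
     rules = (\<lambda>(A, \<alpha>). (f A, map_tm f id \<alpha>)) ` rules G, start = f (start G)\<rparr>"

lemma map_tm_props:
  assumes "\<forall>B \<in> set (nts_of \<alpha>). rg (f B) = rf B"
  shows "nts_of (map_tm f id \<alpha>) = map f (nts_of \<alpha>)" "leaves (map_tm f id \<alpha>) = leaves \<alpha>"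
    "trank rg (map_tm f id \<alpha>) = trank rf \<alpha>" "correct k rg (map_tm f id \<alpha>) = correct k rf \<alpha>"
    "val_with (map_tm f id \<alpha>) z = val_with \<alpha> z" "val (map_tm f id \<alpha>) = val \<alpha>"
  using assms by (induction \<alpha>) auto

context
  fixes f :: "'m \<Rightarrow> 'p" and G :: "('m, 'a) grammar"
  assumes inj: "inj_on f (nts G)"
    and wf: "\<forall>(A, \<alpha>) \<in> rules G. A \<in> nts G \<and> set (nts_of \<alpha>) \<subseteq> nts G"
begin

lemma rk_rename_grammar: "B \<in> nts G \<Longrightarrow> rk (rename_grammar f G) (f B) = rk G B"
  using inj by (simp add: rename_grammar_def the_inv_into_f_f)

lemma rule_rename_grammar:
  assumes "(A, \<alpha>) \<in> rules G"
  shows "nts_of (map_tm f id \<alpha>) = map f (nts_of \<alpha>)" "leaves (map_tm f id \<alpha>) = leaves \<alpha>"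
    "trank (rk (rename_grammar f G)) (map_tm f id \<alpha>) = trank (rk G) \<alpha>"
    "correct k (rk (rename_grammar f G)) (map_tm f id \<alpha>) = correct k (rk G) \<alpha>"
    "val_with (map_tm f id \<alpha>) z = val_with \<alpha> z" "val (map_tm f id \<alpha>) = val \<alpha>"
  using map_tm_props[of \<alpha> "rk (rename_grammar f G)" f "rk G"] assms wf rk_rename_grammar by blast+

lemma is_dcfg_rename_grammar:
  assumes "is_dcfg k Sig G"
  shows "is_dcfg k Sig (rename_grammar f G)"
proof -
  let ?R = "rename_grammar f G"
  have "A' \<in> nts ?R \<and> correct k (rk ?R) \<alpha>' \<and> rk ?R A' = trank (rk ?R) \<alpha>' \<and>
    set (nts_of \<alpha>') \<subseteq> nts ?R \<and>
      (\<forall>u \<in> set (leaves \<alpha>'). tup_len u \<le> 1 \<and> (\<forall>w \<in> set u. set w \<subseteq> Sig))"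
    if r': "(A', \<alpha>') \<in> rules ?R" for A' \<alpha>'
  proof -
    obtain A \<alpha> where r: "(A, \<alpha>) \<in> rules G" "A' = f A" "\<alpha>' = map_tm f id \<alpha>"
      using r' unfolding rename_grammar_def by fastforce
    then have "A \<in> nts G \<and> correct k (rk G) \<alpha> \<and> rk G A = trank (rk G) \<alpha> \<and> set (nts_of \<alpha>) \<subseteq> nts G \<and>
      (\<forall>u \<in> set (leaves \<alpha>). tup_len u \<le> 1 \<and> (\<forall>w \<in> set u. set w \<subseteq> Sig))"
      using assms unfolding is_dcfg_def by fast
    then show ?thesis
      using r rule_rename_grammar[OF r(1)] rk_rename_grammar by (auto simp: rename_grammar_def)
  qed
  then have "\<forall>(A', \<alpha>') \<in> rules ?R. A' \<in> nts ?R \<and> correct k (rk ?R) \<alpha>' \<and>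
    rk ?R A' = trank (rk ?R) \<alpha>' \<and>
      set (nts_of \<alpha>') \<subseteq> nts ?R \<and> (\<forall>u \<in> set (leaves \<alpha>'). tup_len u \<le> 1 \<and> (\<forall>w \<in> set u. set w \<subseteq> Sig))"
    by fast
  moreover have "start ?R \<in> nts ?R" "rk ?R (start ?R) = 0" "finite (nts ?R)" "finite (rules ?R)"
    using assms rk_rename_grammar[of "start G"] by (auto simp: is_dcfg_def rename_grammar_def)
  ultimately show ?thesis unfolding is_dcfg_def by blast
qed

lemma normal_form_rename_grammar:
  assumes "normal_form G"
  shows "normal_form (rename_grammar f G)"
  unfolding normal_form_def
proof
  fix r' assume "r' \<in> rules (rename_grammar f G)"
  then obtain A \<alpha> where r: "(A, \<alpha>) \<in> rules G" "r' = (f A, map_tm f id \<alpha>)"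
    unfolding rename_grammar_def by fastforce
  then have "nf_rule G (A, \<alpha>)" using assms by (simp add: normal_form_def)
  then show "nf_rule (rename_grammar f G) r'"
    unfolding nf_rule_def r(2) by (elim disjE exE conjE) (auto simp: rename_grammar_def)
qed

lemma lgen_imp_lgen_rename_grammar: "lgen (rules G) A y \<Longrightarrow> lgen (rules (rename_grammar f G)) (f A) y"
proof (induction rule: lgen.induct)
  case (lgen_ground A \<alpha>)
  have "(f A, map_tm f id \<alpha>) \<in> rules (rename_grammar f G)"
    using lgen_ground(1) by (force simp: rename_grammar_def)
  moreover have "nts_of (map_tm f id \<alpha>) = []"
    using rule_rename_grammar(1)[OF lgen_ground(1)] lgen_ground(2) by simp
  ultimately show ?case using lgen.lgen_ground rule_rename_grammar(6)[OF lgen_ground(1)] by metis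
next
  case (lgen_step A \<alpha> B z)
  have "(f A, map_tm f id \<alpha>) \<in> rules (rename_grammar f G)"
    using lgen_step(1) by (force simp: rename_grammar_def)
  moreover have "nts_of (map_tm f id \<alpha>) = [f B]"
    using rule_rename_grammar(1)[OF lgen_step(1)] lgen_step(2) by simp
  ultimately show ?case
    using lgen.lgen_step lgen_step.IH rule_rename_grammar(5)[OF lgen_step(1)] by metis
qed

lemma lgen_rename_grammar_imp_lgen:
  "lgen (rules (rename_grammar f G)) A' y \<Longrightarrow> A \<in> nts G \<Longrightarrow> A' = f A \<Longrightarrow> lgen (rules G) A y"
proof (induction arbitrary: A rule: lgen.induct)
  case (lgen_ground A' \<alpha>')
  then obtain A0 \<alpha> where r: "(A0, \<alpha>) \<in> rules G" "f A0 = f A" "\<alpha>' = map_tm f id \<alpha>"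
    by (auto simp: rename_grammar_def)
  then have "A0 = A" using inj wf lgen_ground.prems(1) by (auto dest: inj_onD)
  moreover have "nts_of \<alpha> = []" using lgen_ground(2) r(3) rule_rename_grammar(1)[OF r(1)] by simp
  ultimately show ?case using r(1,3) rule_rename_grammar(6)[OF r(1)] lgen.lgen_ground by metis
next
  case (lgen_step A' \<alpha>' B' z)
  then obtain A0 \<alpha> where r: "(A0, \<alpha>) \<in> rules G" "f A0 = f A" "\<alpha>' = map_tm f id \<alpha>"
    by (auto simp: rename_grammar_def)
  then have "A0 = A" using inj wf lgen_step.prems(1) by (auto dest: inj_onD)
  obtain B where B: "nts_of \<alpha> = [B]" "B' = f B"
    using lgen_step(2) r(3) rule_rename_grammar(1)[OF r(1)] by (auto simp: map_eq_Cons_conv)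
  then have "lgen (rules G) B z" using lgen_step.IH r(1) wf by auto
  with r(1) B(1) have "lgen (rules G) A0 (val_with \<alpha> z)" by (rule lgen.lgen_step)
  then show ?case using r(3) \<open>A0 = A\<close> rule_rename_grammar(5)[OF r(1)] by simp
qed

lemma lang_rename_grammar:
  assumes "start G \<in> nts G" "linear_grammar G" "linear_grammar (rename_grammar f G)"
  shows "lang (rename_grammar f G) = lang G"
proof -
  have "lgen (rules (rename_grammar f G)) (f (start G)) y \<longleftrightarrow> lgen (rules G) (start G) y" for y
    using lgen_imp_lgen_rename_grammar lgen_rename_grammar_imp_lgen[OF _ assms(1) refl] by blast
  moreover have "start (rename_grammar f G) = f (start G)" by (simp add: rename_grammar_def)
  ultimately show ?thesis
    unfolding lang_def lang_nt_eq_lgen[OF assms(2)] lang_nt_eq_lgen[OF assms(3)]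
      by (simp add: set_eq_iff)
qed

end

lemma normal_form_imp_linear: "normal_form G \<Longrightarrow> linear_grammar G"
  unfolding normal_form_def nf_rule_def linear_grammar_def by fastforce

theorem theorem2:
  fixes k :: nat and Sig :: "'a set" and G :: "('n, 'a) grammar"
  assumes "finite Sig"
    and "is_dcfg k Sig G"
    and "linear_grammar G"
  shows "\<exists>G' :: (nat, 'a) grammar.
           is_dcfg k Sig G' \<and> normal_form G' \<and> lang G' = lang G"
proof -
  let ?N = "nf_grammar k Sig G"
  have N: "is_dcfg k Sig ?N" "normal_form ?N" "lang ?N = lang G"
    using nf_grammar_dcfg[OF assms] nf_grammar_normal_form[OF assms]
      lang_nf_grammar_subset[OF assms] lang_subset_nf_grammar[OF assms] by auto
  have fin: "finite (nts ?N)" and start: "start ?N \<in> nts ?N"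
    using N(1) by (simp_all add: is_dcfg_def)
  have wf: "\<forall>(A, \<alpha>) \<in> rules ?N. A \<in> nts ?N \<and> set (nts_of \<alpha>) \<subseteq> nts ?N"
    using N(1) unfolding is_dcfg_def by fast
  obtain f :: "_ \<Rightarrow> nat" where inj: "inj_on f (nts ?N)"
    using finite_imp_inj_to_nat_seg[OF fin] by blast
  have nf: "normal_form (rename_grammar f ?N)" using normal_form_rename_grammar[OF inj wf N(2)] .
  moreover have "lang (rename_grammar f ?N) = lang ?N"
    by (rule lang_rename_grammar[OF inj wf start
          normal_form_imp_linear[OF N(2)] normal_form_imp_linear[OF nf]])
  ultimately show ?thesis
    using is_dcfg_rename_grammar[OF inj wf N(1)] N(3)
      by (intro exI[of _ "rename_grammar f ?N"]) simp
qed
end
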